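(* For every precubical set $B$ there exists a stream covering $\rho: E\rightarrow \vec{|B|}$ such that the preorder $\leqslant_E$ on $E$ is antisymmetric (i.e. a partial order).
   Context: A circulation on a topological space $X$ is a function assigning to each open $V\subset X$ a preorder $\leqslant_V$ on $V$ such that for every collection $\mathcal{O}$ of open subsets of $X$, $\leqslant_{\bigcup\mathcal{O}}$ is the preorder on $\bigcup\mathcal{O}$ with smallest graph containing $\bigcup_{V\in\mathcal{O}}\mathrm{graph}(\leqslant_V)$. A stream is a space with a circulation; $\leqslant_X$ denotes the preorder assigned to $X$ itself. A stream map $f:X\to Y$ is a continuous map with $f(x)\leqslant_V f(y)$ whenever $x\leqslant_{f^{-1}V}y$, for every open $V\subset Y$. The forgetful functor $U$ from streams to spaces is topological; in particular the category of streams is complete and cocomplete, with limits and colimits computed on underlying spaces (colimits carry the final circulation). An open substream of $X$ is an open $V\subset X$ with the circulation $W\mapsto \leqslant_W$ for open $W\subset V$. A stream covering is a surjective stream map $\rho:E\to B$ such that $B$ is covered by open substreams whose preimages under $\rho$ are disjoint unions of open substreams on each of which $\rho$ restricts to an isomorphism of streams onto the corresponding open substream of $B$. Precubical sets: let $[0]=\{0\}$, $[1]=\{0<1\}$, and let $\square$ be the smallest subcategory of the category of posets and monotone maps that is closed under cartesian products (with unit $[0]$) and contains $\delta_-,\delta_+:[0]\to[1]$ (sending $0$ to $0$, resp. $1$); its objects are the $[1]^n$. A precubical set is a functor $X:\square^{op}\to\mathbf{Set}$; write $X_n=X([1]^n)$. Let $\vec{\square}[1]$ be the unit interval $\mathbb{I}=[0,1]$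 with circulation: for open $V\subset\mathbb{I}$, $x\leqslant_V y$ iff $x\le y$ and $[x,y]\subset V$. Let $\vec{\square}[n]$ be the $n$-fold product of $\vec{\square}[1]$ in streams (underlying space $\mathbb{I}^n$); each $\square$-morphism $[1]^m\to[1]^n$ extends linearly to a stream map $\vec\square[m]\to\vec\square[n]$, giving a functor $\vec\square$ from $\square$ to streams. The stream realization of $X$ is the coend $\vec{|X|}=\int^{[1]^n\in\square} X_n\cdot\vec{\square}[n]$ in the category of streams; its underlying space is the usual geometric realization $|X|$ (a CW complex with one $n$-cell for each element of $X_n$). *)

theory Defs
  imports "HOL-Analysis.Analysis"
begin

text \<open>A circulation assigns to each set a relation (its graph); only the values on
open sets matter.  A stream is a topology together with a circulation.\<close>

type_synonym 'a circ = "'a set \<Rightarrow> ('a \<times> 'a) set"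
type_synonym 'a stream = "'a topology \<times> 'a circ"

definition preorder_on :: "'a set \<Rightarrow> ('a \<times> 'a) set \<Rightarrow> bool" where
  "preorder_on S R \<longleftrightarrow> R \<subseteq> S \<times> S \<and> refl_on S R \<and> trans R"

definition is_circulation :: "'a topology \<Rightarrow> 'a circ \<Rightarrow> bool" where
  "is_circulation T C \<longleftrightarrow>
     (\<forall>V. openin T V \<longrightarrow> preorder_on V (C V)) \<and>
     (\<forall>\<O>. (\<forall>V\<in>\<O>. openin T V) \<longrightarrow>
        C (\<Union>\<O>) = \<Inter>{R. preorder_on (\<Union>\<O>) R \<and> (\<Union>V\<in>\<O>. C V) \<subseteq> R})"

definition is_stream :: "'a stream \<Rightarrow> bool" where
  "is_stream X \<longleftrightarrow> is_circulation (fst X) (snd X)"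

definition leq :: "'a stream \<Rightarrow> ('a \<times> 'a) set" where
  "leq X = snd X (topspace (fst X))"

definition stream_map :: "'a stream \<Rightarrow> 'b stream \<Rightarrow> ('a \<Rightarrow> 'b) \<Rightarrow> bool" where
  "stream_map X Y f \<longleftrightarrow> continuous_map (fst X) (fst Y) f \<and>
     (\<forall>V. openin (fst Y) V \<longrightarrow>
        (\<forall>x y. (x, y) \<in> snd X {z \<in> topspace (fst X). f z \<in> V} \<longrightarrow> (f x, f y) \<in> snd Y V))"

definition stream_iso :: "'a stream \<Rightarrow> 'b stream \<Rightarrow> ('a \<Rightarrow> 'b) \<Rightarrow> bool" where
  "stream_iso X Y f \<longleftrightarrow> stream_map X Y f \<and>
     (\<exists>g. stream_map Y X g \<and> (\<forall>x\<in>topspace (fst X). g (f x) = x) \<and>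
          (\<forall>y\<in>topspace (fst Y). f (g y) = y))"

text \<open>Open substream on an open set V: subspace topology, circulation W \<mapsto> \<le>_W
(for W open in V, which are exactly the open sets of X contained in V).\<close>
definition open_substream :: "'a stream \<Rightarrow> 'a set \<Rightarrow> 'a stream" where
  "open_substream X V = (subtopology (fst X) V, snd X)"

definition stream_covering :: "'a stream \<Rightarrow> 'b stream \<Rightarrow> ('a \<Rightarrow> 'b) \<Rightarrow> bool" where
  "stream_covering E B \<rho> \<longleftrightarrow> is_stream E \<and> is_stream B \<and> stream_map E B \<rho> \<and>
     \<rho> ` topspace (fst E) = topspace (fst B) \<and>
     (\<exists>\<U>. (\<forall>U\<in>\<U>. openin (fst B) U) \<and> \<Union>\<U> = topspace (fst B) \<and>
        (\<forall>U\<in>\<U>. \<exists>\<W>. (\<forall>W\<in>\<W>. openin (fst E) W) \<and> pairwise disjnt \<W> \<and>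
            \<Union>\<W> = {e \<in> topspace (fst E). \<rho> e \<in> U} \<and>
            (\<forall>W\<in>\<W>. stream_iso (open_substream E W) (open_substream B U) \<rho>)))"

text \<open>Vertices of [1]^n are boolean lists of length n (False = 0, True = 1); the
product [1]^a \<times> [1]^b is identified with [1]^(a+b) via list append.  A morphism
[1]^m \<rightarrow> [1]^n is recorded as (m, n, f) where f is restricted to lists of length m
(returning [] elsewhere), so that equal maps are equal HOL functions.\<close>

definition restr :: "nat \<Rightarrow> (bool list \<Rightarrow> bool list) \<Rightarrow> bool list \<Rightarrow> bool list" where
  "restr m f = (\<lambda>v. if length v = m then f v else [])"

inductive_set box_mor :: "(nat \<times> nat \<times> (bool list \<Rightarrow> bool list)) set" where
  id0: "(0, 0, restr 0 (\<lambda>v. v)) \<in> box_mor"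
| id1: "(1, 1, restr 1 (\<lambda>v. v)) \<in> box_mor"
| delta_minus: "(0, 1, restr 0 (\<lambda>v. [False])) \<in> box_mor"
| delta_plus: "(0, 1, restr 0 (\<lambda>v. [True])) \<in> box_mor"
| prod: "(a, b, f) \<in> box_mor \<Longrightarrow> (c, d, g) \<in> box_mor \<Longrightarrow>
     (a + c, b + d, restr (a + c) (\<lambda>v. f (take a v) @ g (drop a v))) \<in> box_mor"
| comp: "(a, b, f) \<in> box_mor \<Longrightarrow> (b, c, g) \<in> box_mor \<Longrightarrow>
     (a, c, restr a (\<lambda>v. g (f v))) \<in> box_mor"

text \<open>A precubical set (functor \<open>\<box>\<^sup>o\<^sup>p \<rightarrow> Set\<close>): sets X_n of n-cells and, for each
morphism (m, n, f), a map act m n f : X_n \<rightarrow> X_m, functorially.\<close>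

type_synonym 'c precubical = "(nat \<Rightarrow> 'c set) \<times> (nat \<Rightarrow> nat \<Rightarrow> (bool list \<Rightarrow> bool list) \<Rightarrow> 'c \<Rightarrow> 'c)"

definition precubical_set :: "'c precubical \<Rightarrow> bool" where
  "precubical_set X \<longleftrightarrow>
     (\<forall>m n f. (m, n, f) \<in> box_mor \<longrightarrow> (\<forall>x\<in>fst X n. snd X m n f x \<in> fst X m)) \<and>
     (\<forall>n. \<forall>x\<in>fst X n. snd X n n (restr n (\<lambda>v. v)) x = x) \<and>
     (\<forall>l m n f g. (l, m, f) \<in> box_mor \<longrightarrow> (m, n, g) \<in> box_mor \<longrightarrow>
        (\<forall>x\<in>fst X n. snd X l n (restr l (\<lambda>v. g (f v))) x = snd X l m f (snd X m n g x)))"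

text \<open>Points of I^n are functions nat \<Rightarrow> real, extensional outside {..<n}.\<close>
definition cube :: "nat \<Rightarrow> (nat \<Rightarrow> real) topology" where
  "cube n = product_topology (\<lambda>_. top_of_set {0..1::real}) {..<n}"

definition dI :: "real stream" where
  "dI = (top_of_set {0..1}, (\<lambda>V. {(x, y). x \<le> y \<and> {x..y} \<subseteq> V}))"

text \<open>\<open>\<box>\<close>[n] is the n-fold product of \<open>\<box>\<close>[1] in streams: the initial (= largest)
circulation on I^n making all coordinate projections stream maps.\<close>
definition dcube_circ :: "nat \<Rightarrow> (nat \<Rightarrow> real) circ" where
  "dcube_circ n = (SOME C. is_circulation (cube n) C \<and>
      (\<forall>i<n. stream_map (cube n, C) dI (\<lambda>t. t i)) \<and>
      (\<forall>C'. is_circulation (cube n) C' \<and> (\<forall>i<n. stream_map (cube n, C') dI (\<lambda>t. t i)) \<longrightarrow>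
           (\<forall>V. openin (cube n) V \<longrightarrow> C' V \<subseteq> C V)))"

definition dcube :: "nat \<Rightarrow> (nat \<Rightarrow> real) stream" where
  "dcube n = (cube n, dcube_circ n)"

text \<open>Linear (multilinear) extension of a vertex map [1]^m \<rightarrow> [1]^n to I^m \<rightarrow> I^n.\<close>
definition lin_ext :: "nat \<Rightarrow> nat \<Rightarrow> (bool list \<Rightarrow> bool list) \<Rightarrow> (nat \<Rightarrow> real) \<Rightarrow> nat \<Rightarrow> real" where
  "lin_ext m n f t = (\<lambda>i. if i < n then
      (\<Sum>v\<in>{v. length v = m}. (\<Prod>j<m. if v ! j then t j else 1 - t j) * (if f v ! i then 1 else 0))
     else undefined)"

type_synonym 'c rpt = "(nat \<times> 'c \<times> (nat \<Rightarrow> real)) set"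

definition cells :: "'c precubical \<Rightarrow> (nat \<times> 'c \<times> (nat \<Rightarrow> real)) set" where
  "cells X = {(n, x, t). x \<in> fst X n \<and> t \<in> topspace (cube n)}"

definition coend_gen :: "'c precubical \<Rightarrow> ((nat \<times> 'c \<times> (nat \<Rightarrow> real)) \<times> (nat \<times> 'c \<times> (nat \<Rightarrow> real))) set" where
  "coend_gen X = {((m, snd X m n f x, t), (n, x, lin_ext m n f t)) | m n f x t.
      (m, n, f) \<in> box_mor \<and> x \<in> fst X n \<and> t \<in> topspace (cube m)}"

definition coend_rel :: "'c precubical \<Rightarrow> ((nat \<times> 'c \<times> (nat \<Rightarrow> real)) \<times> (nat \<times> 'c \<times> (nat \<Rightarrow> real))) set" where
  "coend_rel X = \<Inter>{R. equiv (cells X) R \<and> coend_gen X \<subseteq> R}"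

definition real_pt :: "'c precubical \<Rightarrow> nat \<Rightarrow> 'c \<Rightarrow> (nat \<Rightarrow> real) \<Rightarrow> 'c rpt" where
  "real_pt X n x t = coend_rel X `` {(n, x, t)}"

text \<open>Underlying space: quotient (final) topology w.r.t. the characteristic maps.\<close>
definition real_top :: "'c precubical \<Rightarrow> 'c rpt topology" where
  "real_top X = topology (\<lambda>U. U \<subseteq> cells X // coend_rel X \<and>
      (\<forall>n. \<forall>x\<in>fst X n. openin (cube n) {t \<in> topspace (cube n). real_pt X n x t \<in> U}))"

text \<open>Circulation: the final (= smallest) circulation making all characteristic maps
\<open>\<box>\<close>[n] \<rightarrow> |X| stream maps (colimits in streams carry the final circulation).\<close>
definition real_circ :: "'c precubical \<Rightarrow> 'c rpt circ" where
  "real_circ X = (SOME C. is_circulation (real_top X) C \<and>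
      (\<forall>n. \<forall>x\<in>fst X n. stream_map (dcube n) (real_top X, C) (real_pt X n x)) \<and>
      (\<forall>C'. is_circulation (real_top X) C' \<and>
            (\<forall>n. \<forall>x\<in>fst X n. stream_map (dcube n) (real_top X, C') (real_pt X n x)) \<longrightarrow>
           (\<forall>V. openin (real_top X) V \<longrightarrow> C V \<subseteq> C' V)))"

definition stream_realization :: "'c precubical \<Rightarrow> 'c rpt stream" where
  "stream_realization X = (real_top X, real_circ X)"

end

theory Submission
  imports Defs
begin

text \<open>
  The idea: on a cell \<open>(n, x)\<close> consider the phase
  \<open>exp (2\<pi>i (t\<^sub>1 + \<dots> + t\<^sub>n))\<close>.  Linear extensions of morphisms of \<open>\<box>\<close> shift the
  coordinate sum by an integer, so the phase is a well defined continuous map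
  \<open>|B| \<rightarrow> S\<^sup>1\<close>.  Its pullback \<open>E\<close> of the exponential covering \<open>\<real> \<rightarrow> S\<^sup>1\<close> is a covering
  of \<open>|B|\<close>, and the real coordinate of \<open>E\<close> ("height") strictly increases along the
  lifted circulation, because directed segments of cubes increase the coordinate sum.

  Circulations are handled through the preorder
  generated by a relation and a general criterion (generators that are monotone and
  local yield a circulation).  This criterion identifies the product circulation of the
  directed cube (generated by straight directed segments), the final circulation of the
  realization (generated by images of cells) and the circulation of the covering space
  (generated by lifts into sheets).  The monotonicity of the height along the latter
  gives antisymmetry; the sheets over two slit domains give the covering.
\<close>

definition preorder_hull :: "'a set \<Rightarrow> ('a \<times> 'a) set \<Rightarrow> ('a \<times> 'a) set" where
  "preorder_hull S G = \<Inter>{R. preorder_on S R \<and> G \<subseteq> R}"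

lemma is_circulation_iff:
  "is_circulation T C \<longleftrightarrow> (\<forall>V. openin T V \<longrightarrow> preorder_on V (C V)) \<and>
     (\<forall>\<O>. (\<forall>V\<in>\<O>. openin T V) \<longrightarrow> C (\<Union>\<O>) = preorder_hull (\<Union>\<O>) (\<Union>V\<in>\<O>. C V))"
  by (simp add: is_circulation_def preorder_hull_def)

lemma preorder_onI:
  "R \<subseteq> S \<times> S \<Longrightarrow> (\<And>x. x \<in> S \<Longrightarrow> (x, x) \<in> R) \<Longrightarrow>
   (\<And>x y z. (x, y) \<in> R \<Longrightarrow> (y, z) \<in> R \<Longrightarrow> (x, z) \<in> R) \<Longrightarrow> preorder_on S R"
  unfolding preorder_on_def refl_on_def by (blast intro: transI)

lemma preorder_on_field: "preorder_on S R \<Longrightarrow> (x, y) \<in> R \<Longrightarrow> x \<in> S \<and> y \<in> S"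
  unfolding preorder_on_def by blast

lemma preorder_on_refl: "preorder_on S R \<Longrightarrow> x \<in> S \<Longrightarrow> (x, x) \<in> R"
  unfolding preorder_on_def refl_on_def by blast

lemma preorder_on_trans: "preorder_on S R \<Longrightarrow> (x, y) \<in> R \<Longrightarrow> (y, z) \<in> R \<Longrightarrow> (x, z) \<in> R"
  unfolding preorder_on_def by (meson transD)

lemma preorder_on_Collect:
  assumes "\<And>x. x \<in> S \<Longrightarrow> P x x"
    and "\<And>x y z. x \<in> S \<Longrightarrow> y \<in> S \<Longrightarrow> z \<in> S \<Longrightarrow> P x y \<Longrightarrow> P y z \<Longrightarrow> P x z"
  shows "preorder_on S {(x, y). x \<in> S \<and> y \<in> S \<and> P x y}"
  by (rule preorder_onI) (use assms in blast)+

lemma preorder_hull_preorder: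
  assumes "G \<subseteq> S \<times> S"
  shows "preorder_on S (preorder_hull S G)"
proof (rule preorder_onI)
  have "preorder_on S (S \<times> S)" by (rule preorder_onI) auto
  then show "preorder_hull S G \<subseteq> S \<times> S"
    using assms unfolding preorder_hull_def by blast
next
  fix x assume "x \<in> S"
  then show "(x, x) \<in> preorder_hull S G"
    unfolding preorder_hull_def by (blast intro: preorder_on_refl)
next
  fix x y z assume "(x, y) \<in> preorder_hull S G" "(y, z) \<in> preorder_hull S G"
  then show "(x, z) \<in> preorder_hull S G"
    unfolding preorder_hull_def by (blast intro: preorder_on_trans)
qed

lemma preorder_hull_least: "preorder_on S R \<Longrightarrow> G \<subseteq> R \<Longrightarrow> preorder_hull S G \<subseteq> R"
  unfolding preorder_hull_def by blast

lemma preorder_hull_incl: "G \<subseteq> preorder_hull S G"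
  unfolding preorder_hull_def by blast

lemma preorder_hull_induct [consumes 2, case_names refl trans gen]:
  assumes "(x, y) \<in> preorder_hull S G" "G \<subseteq> S \<times> S"
    and "\<And>x. x \<in> S \<Longrightarrow> P x x"
    and "\<And>x y z. x \<in> S \<Longrightarrow> y \<in> S \<Longrightarrow> z \<in> S \<Longrightarrow> P x y \<Longrightarrow> P y z \<Longrightarrow> P x z"
    and "\<And>x y. (x, y) \<in> G \<Longrightarrow> P x y"
  shows "P x y"
proof -
  have "preorder_hull S G \<subseteq> {(x, y). x \<in> S \<and> y \<in> S \<and> P x y}"
    by (rule preorder_hull_least[OF preorder_on_Collect]) (use assms(2-5) in blast)+
  then show ?thesis using assms(1) by blast
qed

lemma preorder_hull_map:
  assumes "(x, y) \<in> preorder_hull S G" "G \<subseteq> S \<times> S"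
    and R: "preorder_on S' R" and "f ` S \<subseteq> S'"
    and "\<And>a b. (a, b) \<in> G \<Longrightarrow> (f a, f b) \<in> R"
  shows "(f x, f y) \<in> R"
  using assms(1,2)
proof (induction rule: preorder_hull_induct)
  case (refl x)
  then show ?case using assms(4) by (blast intro: preorder_on_refl[OF R])
qed (use assms(5) preorder_on_trans[OF R] in blast)+

lemma preorder_hull_mono:
  assumes "G' \<subseteq> S' \<times> S'" "S \<subseteq> S'" "G \<subseteq> G'" "G \<subseteq> S \<times> S"
  shows "preorder_hull S G \<subseteq> preorder_hull S' G'"
proof
  fix p assume "p \<in> preorder_hull S G"
  then obtain x y where p: "p = (x, y)" "(x, y) \<in> preorder_hull S G" by (cases p) auto
  have "(id x, id y) \<in> preorder_hull S' G'"
  proof (rule preorder_hull_map[OF p(2) assms(4) preorder_hull_preorder[OF assms(1)]])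
    show "id ` S \<subseteq> S'" using assms(2) by simp
    show "(id a, id b) \<in> preorder_hull S' G'" if "(a, b) \<in> G" for a b
      using that assms(3) preorder_hull_incl[of G' S'] by auto
  qed
  then show "p \<in> preorder_hull S' G'" using p by simp
qed

lemma circ_preorder: "is_circulation T C \<Longrightarrow> openin T V \<Longrightarrow> preorder_on V (C V)"
  by (simp add: is_circulation_def)

lemma circ_union:
  "is_circulation T C \<Longrightarrow> (\<And>V. V \<in> \<O> \<Longrightarrow> openin T V) \<Longrightarrow>
     C (\<Union>\<O>) = preorder_hull (\<Union>\<O>) (\<Union>V\<in>\<O>. C V)"
  by (simp add: is_circulation_iff)

lemma circ_mono:
  assumes C: "is_circulation T C" and "openin T V" "openin T W" "V \<subseteq> W"
  shows "C V \<subseteq> C W"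
proof -
  have "C (\<Union>{V, W}) = preorder_hull (\<Union>{V, W}) (\<Union>U\<in>{V, W}. C U)"
    by (rule circ_union[OF C]) (use assms(2,3) in blast)
  then have "C W = preorder_hull W (C V \<union> C W)"
    using assms(4) by (simp add: sup.absorb2)
  then show ?thesis using preorder_hull_incl by blast
qed

lemma circ_union_field:
  assumes C: "is_circulation T C" and opens: "\<And>V. V \<in> \<O> \<Longrightarrow> openin T V"
  shows "(\<Union>V\<in>\<O>. C V) \<subseteq> \<Union>\<O> \<times> \<Union>\<O>"
proof
  fix p assume "p \<in> (\<Union>V\<in>\<O>. C V)"
  then obtain V a b where "V \<in> \<O>" "p = (a, b)" "(a, b) \<in> C V" by (metis UN_E surj_pair)
  then show "p \<in> \<Union>\<O> \<times> \<Union>\<O>" using preorder_on_field[OF circ_preorder[OF C opens]] by blast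
qed

lemma circulation_generatedI:
  assumes field: "\<And>V. openin T V \<Longrightarrow> Gen V \<subseteq> V \<times> V"
    and mono: "\<And>V W. openin T V \<Longrightarrow> openin T W \<Longrightarrow> V \<subseteq> W \<Longrightarrow> Gen V \<subseteq> Gen W"
    and local: "\<And>\<O>. (\<And>V. V \<in> \<O> \<Longrightarrow> openin T V) \<Longrightarrow>
                   Gen (\<Union>\<O>) \<subseteq> preorder_hull (\<Union>\<O>) (\<Union>V\<in>\<O>. Gen V)"
  shows "is_circulation T (\<lambda>V. preorder_hull V (Gen V))"
  unfolding is_circulation_iff
proof (intro conjI allI impI)
  fix V assume "openin T V"
  then show "preorder_on V (preorder_hull V (Gen V))" by (intro preorder_hull_preorder field)
next
  fix \<O> assume "\<forall>V\<in>\<O>. openin T V"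
  then have opens: "\<And>V. V \<in> \<O> \<Longrightarrow> openin T V" by blast
  let ?U = "\<Union>\<O>" and ?C = "\<lambda>V. preorder_hull V (Gen V)"
  have U: "openin T ?U" using opens by blast
  have C_field: "?C V \<subseteq> V \<times> V" if "V \<in> \<O>" for V
    using preorder_on_field[OF preorder_hull_preorder[OF field[OF opens[OF that]]]] by auto
  then have hull_field: "(\<Union>V\<in>\<O>. ?C V) \<subseteq> ?U \<times> ?U" by blast
  have Gen_field: "(\<Union>V\<in>\<O>. Gen V) \<subseteq> ?U \<times> ?U" using field opens by blast
  have "Gen ?U \<subseteq> preorder_hull ?U (\<Union>V\<in>\<O>. Gen V)" by (rule local[OF opens])
  also have "\<dots> \<subseteq> preorder_hull ?U (\<Union>V\<in>\<O>. ?C V)"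
    by (rule preorder_hull_mono[OF hull_field order_refl _ Gen_field])
      (use preorder_hull_incl in blast)
  finally have "?C ?U \<subseteq> preorder_hull ?U (\<Union>V\<in>\<O>. ?C V)"
    by (intro preorder_hull_least preorder_hull_preorder hull_field)
  moreover have "?C V \<subseteq> ?C ?U" if "V \<in> \<O>" for V
    by (rule preorder_hull_mono[OF field[OF U]])
      (use that opens field mono[OF opens[OF that] U] in blast)+
  then have "preorder_hull ?U (\<Union>V\<in>\<O>. ?C V) \<subseteq> ?C ?U"
    by (intro preorder_hull_least preorder_hull_preorder field U) blast
  ultimately show "?C ?U = preorder_hull ?U (\<Union>V\<in>\<O>. ?C V)" by (rule subset_antisym)
qed

lemma path_Lebesgue_number:
  fixes p :: "real \<Rightarrow> 'a"
  assumes p: "continuous_map (top_of_set {0..1}) X p"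
    and opens: "\<And>V. V \<in> \<O> \<Longrightarrow> openin X V"
    and covered: "\<And>\<tau>. \<tau> \<in> {0..1} \<Longrightarrow> p \<tau> \<in> \<Union>\<O>"
  obtains \<delta> :: real where "0 < \<delta>"
    "\<And>T. T \<subseteq> {0..1} \<Longrightarrow> diameter T < \<delta> \<Longrightarrow> \<exists>V\<in>\<O>. \<forall>\<tau>\<in>T. p \<tau> \<in> V"
proof -
  have "\<forall>V\<in>\<O>. \<exists>K. open K \<and> {\<tau>\<in>{0..1}. p \<tau> \<in> V} = {0..1} \<inter> K"
  proof
    fix V assume "V \<in> \<O>"
    have "openin (top_of_set {0..1}) {\<tau> \<in> topspace (top_of_set {0..1}). p \<tau> \<in> V}"
      by (rule openin_continuous_map_preimage[OF p opens[OF \<open>V \<in> \<O>\<close>]])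
    then show "\<exists>K. open K \<and> {\<tau>\<in>{0..1}. p \<tau> \<in> V} = {0..1} \<inter> K"
      by (simp add: openin_open)
  qed
  then obtain K where K: "\<And>V. V \<in> \<O> \<Longrightarrow> open (K V) \<and> {\<tau>\<in>{0..1}. p \<tau> \<in> V} = {0..1} \<inter> K V"
    by metis
  have ne: "K ` \<O> \<noteq> {}" using covered[of 0] by auto
  have cov: "{0..1} \<subseteq> \<Union>(K ` \<O>)"
  proof
    fix \<tau> :: real assume "\<tau> \<in> {0..1}"
    then obtain V where "V \<in> \<O>" "p \<tau> \<in> V" using covered by blast
    then show "\<tau> \<in> \<Union>(K ` \<O>)" using K[of V] \<open>\<tau> \<in> {0..1}\<close> by blast
  qed
  obtain \<delta> where "0 < \<delta>" and \<delta>: "\<And>T. \<lbrakk>T \<subseteq> {0..1}; diameter T < \<delta>\<rbrakk> \<Longrightarrow> \<exists>B\<in>K ` \<O>. T \<subseteq> B"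
    using Lebesgue_number_lemma[OF compact_Icc ne cov] K by blast
  show ?thesis
  proof (rule that[OF \<open>0 < \<delta>\<close>])
    fix T :: "real set" assume T: "T \<subseteq> {0..1}" "diameter T < \<delta>"
    then obtain V where V: "V \<in> \<O>" "T \<subseteq> K V" using \<delta> by blast
    have "p \<tau> \<in> V" if "\<tau> \<in> T" for \<tau>
    proof -
      have "\<tau> \<in> {0..1} \<inter> K V" using that T(1) V(2) by blast
      then show ?thesis using K[OF V(1)] by blast
    qed
    then show "\<exists>V\<in>\<O>. \<forall>\<tau>\<in>T. p \<tau> \<in> V" using V(1) by blast
  qed
qed

lemma path_subdivision:
  fixes p :: "real \<Rightarrow> 'a"
  assumes p: "continuous_map (top_of_set {0..1}) X p"
    and opens: "\<And>V. V \<in> \<O> \<Longrightarrow> openin X V"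
    and covered: "\<And>\<tau>. \<tau> \<in> {0..1} \<Longrightarrow> p \<tau> \<in> \<Union>\<O>"
  obtains N :: nat where "N > 0"
    "\<And>j. j < N \<Longrightarrow> \<exists>V\<in>\<O>. \<forall>\<tau>\<in>{real j / N..real (Suc j) / N}. p \<tau> \<in> V"
proof -
  obtain \<delta> :: real where "0 < \<delta>"
    and \<delta>: "\<And>T. T \<subseteq> {0..1} \<Longrightarrow> diameter T < \<delta> \<Longrightarrow> \<exists>V\<in>\<O>. \<forall>\<tau>\<in>T. p \<tau> \<in> V"
    using path_Lebesgue_number[OF p opens covered] by blast
  obtain N :: nat where N: "N > 1 / \<delta>" using reals_Archimedean2 by blast
  then have "N > 0"
    using \<open>0 < \<delta>\<close> by (metis divide_pos_pos of_nat_0_less_iff zero_less_one order.strict_trans)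
  moreover have "\<exists>V\<in>\<O>. \<forall>\<tau>\<in>{real j / N..real (Suc j) / N}. p \<tau> \<in> V" if "j < N" for j
  proof (rule \<delta>)
    have "0 \<le> real j / N" "real j / N \<le> real (Suc j) / N" "real (Suc j) / N \<le> 1"
      using that \<open>N > 0\<close> by (auto simp: divide_right_mono)
    then show "{real j / N..real (Suc j) / N} \<subseteq> {0..1}" by auto
    have "real (Suc j) / N - real j / N = 1 / N" using \<open>N > 0\<close> by (simp add: field_simps)
    also have "\<dots> < \<delta>" using N \<open>0 < \<delta>\<close> \<open>N > 0\<close> by (simp add: field_simps)
    finally show "diameter {real j / N..real (Suc j) / N} < \<delta>"
      using \<open>real j / N \<le> real (Suc j) / N\<close> by simp
  qed
  ultimately show ?thesis using that by blast
qed

lemma topspace_cube: "topspace (cube n) = PiE {..<n} (\<lambda>_. {0..1})"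
  by (simp add: cube_def)

definition lin_path :: "(nat \<Rightarrow> real) \<Rightarrow> (nat \<Rightarrow> real) \<Rightarrow> real \<Rightarrow> nat \<Rightarrow> real" where
  "lin_path s t \<tau> = (\<lambda>i. s i + \<tau> * (t i - s i))"

definition coord_le :: "nat \<Rightarrow> (nat \<Rightarrow> real) \<Rightarrow> (nat \<Rightarrow> real) \<Rightarrow> bool" where
  "coord_le n s t \<longleftrightarrow> (\<forall>i<n. s i \<le> t i)"

text \<open>The directed segments inside \<open>V\<close>: coordinatewise increasing pairs whose straight
  segment stays in \<open>V\<close>.  They generate the circulation of the directed cube.\<close>
definition monotone_segments :: "nat \<Rightarrow> (nat \<Rightarrow> real) set \<Rightarrow> ((nat \<Rightarrow> real) \<times> (nat \<Rightarrow> real)) set" where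
  "monotone_segments n V =
     {(s, t). s \<in> V \<and> t \<in> V \<and> coord_le n s t \<and> (\<forall>\<tau>\<in>{0..1}. lin_path s t \<tau> \<in> V)}"

definition segment_circ :: "nat \<Rightarrow> (nat \<Rightarrow> real) set \<Rightarrow> ((nat \<Rightarrow> real) \<times> (nat \<Rightarrow> real)) set" where
  "segment_circ n V = preorder_hull V (monotone_segments n V)"

lemma lin_path_0 [simp]: "lin_path s t 0 = s" and lin_path_1 [simp]: "lin_path s t 1 = t"
  by (auto simp: lin_path_def)

lemma lin_path_lin_path:
  "lin_path (lin_path s t a) (lin_path s t b) \<tau> = lin_path s t (a + \<tau> * (b - a))"
  by (auto simp: lin_path_def algebra_simps)

lemma convex_comb_in_unit:
  fixes a b \<tau> :: real
  assumes "a \<in> {0..1}" "b \<in> {0..1}" "\<tau> \<in> {0..1}"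
  shows "a + \<tau> * (b - a) \<in> {0..1}"
proof -
  have "a + \<tau> * (b - a) = (1 - \<tau>) * a + \<tau> * b" by (simp add: algebra_simps)
  moreover have "0 \<le> (1 - \<tau>) * a + \<tau> * b" using assms by simp
  moreover have "(1 - \<tau>) * a + \<tau> * b \<le> (1 - \<tau>) * 1 + \<tau> * 1"
    using assms by (intro add_mono mult_left_mono) auto
  ultimately show ?thesis by simp
qed

lemma lin_path_in_cube:
  assumes "s \<in> topspace (cube n)" "t \<in> topspace (cube n)" "\<tau> \<in> {0..1}"
  shows "lin_path s t \<tau> \<in> topspace (cube n)"
  using assms convex_comb_in_unit[OF _ _ assms(3)]
  unfolding topspace_cube lin_path_def PiE_iff extensional_def by auto

lemma lin_path_cont:
  assumes "s \<in> topspace (cube n)" "t \<in> topspace (cube n)"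
  shows "continuous_map (top_of_set {0..1}) (cube n) (lin_path s t)"
  unfolding cube_def continuous_map_componentwise
proof (intro conjI ballI)
  show "lin_path s t ` topspace (top_of_set {0..1}) \<subseteq> extensional {..<n}"
    using lin_path_in_cube[OF assms] by (auto simp: topspace_cube PiE_iff)
  fix k assume "k \<in> {..<n}"
  have "continuous_map (top_of_set {0..1}) euclidean (\<lambda>x. lin_path s t x k)"
    unfolding lin_path_def continuous_map_iff_continuous by (intro continuous_intros)
  then show "continuous_map (top_of_set {0..1}) (top_of_set {0..1}) (\<lambda>x. lin_path s t x k)"
    using lin_path_in_cube[OF assms] \<open>k \<in> {..<n}\<close>
    by (auto simp: continuous_map_in_subtopology topspace_cube PiE_iff)
qed

lemma lin_path_mono:
  assumes "coord_le n s t" "a \<le> b"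
  shows "coord_le n (lin_path s t a) (lin_path s t b)"
  using assms unfolding coord_le_def lin_path_def by (simp add: mult_right_mono)

lemma lin_path_coord_onto:
  assumes "s i \<le> c" "c \<le> t i"
  shows "\<exists>\<tau>\<in>{0..1}. lin_path s t \<tau> i = c"
proof (cases "s i = t i")
  case True
  then show ?thesis using assms by (intro bexI[of _ 0]) auto
next
  case False
  then have "s i < t i" using assms by simp
  then show ?thesis using assms unfolding lin_path_def
    by (intro bexI[of _ "(c - s i) / (t i - s i)"]) (auto simp: field_simps)
qed

lemma monotone_segments_field: "monotone_segments n V \<subseteq> V \<times> V"
  unfolding monotone_segments_def by blast

lemma monotone_segments_mono: "V \<subseteq> W \<Longrightarrow> monotone_segments n V \<subseteq> monotone_segments n W"
  unfolding monotone_segments_def by blast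

lemma segment_circ_preorder: "preorder_on V (segment_circ n V)"
  unfolding segment_circ_def by (rule preorder_hull_preorder[OF monotone_segments_field])

lemma monotone_subsegment:
  assumes "coord_le n s t" "0 \<le> a" "a \<le> b" "b \<le> 1"
    and inV: "\<And>\<tau>. \<tau> \<in> {a..b} \<Longrightarrow> lin_path s t \<tau> \<in> V"
  shows "(lin_path s t a, lin_path s t b) \<in> monotone_segments n V"
  unfolding monotone_segments_def
proof (intro CollectI case_prodI conjI ballI)
  show "lin_path s t a \<in> V" "lin_path s t b \<in> V" using inV assms by auto
  show "coord_le n (lin_path s t a) (lin_path s t b)" by (rule lin_path_mono[OF assms(1,3)])
  fix \<tau> :: real assume "\<tau> \<in> {0..1}"
  then have "a + \<tau> * (b - a) \<in> {a..b}"
    using assms(3) mult_right_mono[of \<tau> 1 "b - a"] by auto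
  then show "lin_path (lin_path s t a) (lin_path s t b) \<tau> \<in> V"
    unfolding lin_path_lin_path by (rule inV)
qed

lemma monotone_segments_local:
  assumes opens: "\<And>V. V \<in> \<O> \<Longrightarrow> openin (cube n) V"
  shows "monotone_segments n (\<Union>\<O>) \<subseteq> preorder_hull (\<Union>\<O>) (\<Union>V\<in>\<O>. monotone_segments n V)"
proof
  fix st assume st: "st \<in> monotone_segments n (\<Union>\<O>)"
  obtain s t where st_eq: "st = (s, t)" by (cases st)
  let ?R = "preorder_hull (\<Union>\<O>) (\<Union>V\<in>\<O>. monotone_segments n V)"
  have R: "preorder_on (\<Union>\<O>) ?R"
    by (rule preorder_hull_preorder) (use monotone_segments_field in blast)
  have s: "s \<in> \<Union>\<O>" and t: "t \<in> \<Union>\<O>" and le: "coord_le n s t"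
    and covered: "\<And>\<tau>. \<tau> \<in> {0..1} \<Longrightarrow> lin_path s t \<tau> \<in> \<Union>\<O>"
    using st unfolding st_eq monotone_segments_def by auto
  have "\<Union>\<O> \<subseteq> topspace (cube n)" using opens openin_subset by blast
  then have s_cube: "s \<in> topspace (cube n)" and t_cube: "t \<in> topspace (cube n)" using s t by auto
  obtain N :: nat where "N > 0" and pieces:
    "\<And>j. j < N \<Longrightarrow> \<exists>V\<in>\<O>. \<forall>\<tau>\<in>{real j / N..real (Suc j) / N}. lin_path s t \<tau> \<in> V"
    using path_subdivision[OF lin_path_cont[OF s_cube t_cube] opens covered] by blast
  have "(s, lin_path s t (real j / N)) \<in> ?R" if "j \<le> N" for j
    using that
  proof (induction j)
    case 0
    then show ?case using preorder_on_refl[OF R s] by simp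
  next
    case (Suc j)
    then have "j < N" by simp
    then obtain V where "V \<in> \<O>"
      and V: "\<And>\<tau>. \<tau> \<in> {real j / N..real (Suc j) / N} \<Longrightarrow> lin_path s t \<tau> \<in> V"
      using pieces by blast
    have "0 \<le> real j / N" "real j / N \<le> real (Suc j) / N" "real (Suc j) / N \<le> 1"
      using Suc.prems by (simp_all add: divide_right_mono)
    then have "(lin_path s t (real j / N), lin_path s t (real (Suc j) / N)) \<in> monotone_segments n V"
      by (intro monotone_subsegment[OF le _ _ _ V])
    then have "(lin_path s t (real j / N), lin_path s t (real (Suc j) / N)) \<in> ?R"
      using \<open>V \<in> \<O>\<close> by (blast intro: subsetD[OF preorder_hull_incl])
    moreover have "(s, lin_path s t (real j / N)) \<in> ?R" using Suc by simp
    ultimately show ?case using preorder_on_trans[OF R] by blast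
  qed
  from this[of N] show "st \<in> ?R" using \<open>N > 0\<close> st_eq by simp
qed

lemma segment_circ_circulation: "is_circulation (cube n) (segment_circ n)"
proof -
  have "is_circulation (cube n) (\<lambda>V. preorder_hull V (monotone_segments n V))"
    by (rule circulation_generatedI[OF monotone_segments_field monotone_segments_mono
          monotone_segments_local])
  then show ?thesis unfolding segment_circ_def[abs_def] .
qed

lemma dI_preorder: "preorder_on V (snd dI V)"
proof (rule preorder_onI)
  show "snd dI V \<subseteq> V \<times> V" by (auto simp: dI_def)
  show "(x, x) \<in> snd dI V" if "x \<in> V" for x using that by (simp add: dI_def)
  fix x y z assume "(x, y) \<in> snd dI V" "(y, z) \<in> snd dI V"
  then have "x \<le> y" "y \<le> z" "{x..y} \<union> {y..z} \<subseteq> V" by (auto simp: dI_def)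
  moreover have "{x..z} \<subseteq> {x..y} \<union> {y..z}" by auto
  ultimately show "(x, z) \<in> snd dI V" unfolding dI_def by auto
qed

lemma proj_cont: "i < n \<Longrightarrow> continuous_map (cube n) (top_of_set {0..1}) (\<lambda>t. t i)"
  unfolding cube_def by (rule continuous_map_product_projection) simp

lemma segment_circ_proj:
  assumes "i < n"
  shows "stream_map (cube n, segment_circ n) dI (\<lambda>t. t i)"
  unfolding stream_map_def fst_conv snd_conv
proof (intro conjI allI impI)
  show "continuous_map (cube n) (fst dI) (\<lambda>t. t i)"
    using proj_cont[OF assms] by (simp add: dI_def)
  fix V x y
  let ?P = "{z \<in> topspace (cube n). z i \<in> V}"
  assume "(x, y) \<in> segment_circ n ?P"
  then show "(x i, y i) \<in> snd dI V"
    unfolding segment_circ_def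
  proof (rule preorder_hull_map[OF _ monotone_segments_field dI_preorder])
    show "(\<lambda>z. z i) ` ?P \<subseteq> V" by blast
    fix a b assume "(a, b) \<in> monotone_segments n ?P"
    then have "a i \<le> b i" and seg: "\<And>\<tau>. \<tau> \<in> {0..1} \<Longrightarrow> lin_path a b \<tau> i \<in> V"
      using assms unfolding monotone_segments_def coord_le_def by auto
    moreover have "{a i..b i} \<subseteq> V"
      using lin_path_coord_onto[of a i _ b] seg by fastforce
    ultimately show "(a i, b i) \<in> snd dI V" by (simp add: dI_def)
  qed
qed

lemma PiE_open_cube:
  assumes "\<And>i. i < n \<Longrightarrow> openin (top_of_set {0..1}) (U i)"
  shows "openin (cube n) (PiE {..<n} U)"
  unfolding cube_def openin_product_topology_alt
  using assms by (intro ballI exI[of _ U]) auto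

text \<open>Boxes are convex: coordinatewise increasing pairs in a box are directed segments.\<close>
lemma box_monotone_segment:
  assumes a: "a \<in> PiE {..<n} U" and b: "b \<in> PiE {..<n} U"
    and coords: "\<And>i. i < n \<Longrightarrow> a i \<le> b i \<and> {a i..b i} \<subseteq> U i"
  shows "(a, b) \<in> monotone_segments n (PiE {..<n} U)"
  unfolding monotone_segments_def
proof (intro CollectI case_prodI conjI ballI)
  show "a \<in> PiE {..<n} U" "b \<in> PiE {..<n} U" by (fact a, fact b)
  show "coord_le n a b" using coords unfolding coord_le_def by blast
  fix \<tau> :: real assume \<tau>: "\<tau> \<in> {0..1}"
  show "lin_path a b \<tau> \<in> PiE {..<n} U"
  proof (rule PiE_I)
    fix i assume "i \<in> {..<n}"
    then have c: "a i \<le> b i" "{a i..b i} \<subseteq> U i" using coords by auto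
    have "0 \<le> \<tau> * (b i - a i)" using \<tau> c by auto
    moreover have "\<tau> * (b i - a i) \<le> 1 * (b i - a i)" using \<tau> c by (intro mult_right_mono) auto
    ultimately have "lin_path a b \<tau> i \<in> {a i..b i}" unfolding lin_path_def by auto
    then show "lin_path a b \<tau> i \<in> U i" using c by blast
  next
    fix i assume "i \<notin> {..<n}"
    then have "a i = undefined" "b i = undefined" using a b by (metis PiE_arb)+
    then show "lin_path a b \<tau> i = undefined" unfolding lin_path_def by simp
  qed
qed

lemma circ_box_directed:
  assumes C: "is_circulation (cube n) C" and proj: "\<forall>i<n. stream_map (cube n, C) dI (\<lambda>t. t i)"
    and U: "\<And>i. i < n \<Longrightarrow> openin (top_of_set {0..1}) (U i)"
    and ab: "(a, b) \<in> C (PiE {..<n} U)"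
  shows "(a, b) \<in> monotone_segments n (PiE {..<n} U)"
proof -
  let ?W = "PiE {..<n} U"
  have W: "openin (cube n) ?W" using U by (rule PiE_open_cube)
  have "a i \<le> b i \<and> {a i..b i} \<subseteq> U i" if "i < n" for i
  proof -
    let ?P = "{w \<in> topspace (cube n). w i \<in> U i}"
    have P: "openin (cube n) ?P"
      by (rule openin_continuous_map_preimage[OF proj_cont[OF that] U[OF that]])
    have "?W \<subseteq> ?P" using openin_subset[OF W] that by auto
    then have "(a, b) \<in> C ?P" using circ_mono[OF C W P] ab by blast
    moreover have "openin (fst dI) (U i)" using U[OF that] by (simp add: dI_def)
    ultimately have "(a i, b i) \<in> snd dI (U i)"
      using proj that unfolding stream_map_def by simp
    then show ?thesis by (simp add: dI_def)
  qed
  moreover have "a \<in> ?W" "b \<in> ?W" using preorder_on_field[OF circ_preorder[OF C W] ab] by auto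
  ultimately show ?thesis using box_monotone_segment by blast
qed

text \<open>Every circulation on \<open>I\<^sup>n\<close> making the projections stream maps is contained in the
  segment circulation, since open sets are unions of open boxes.\<close>
lemma segment_circ_largest:
  assumes C: "is_circulation (cube n) C" and proj: "\<forall>i<n. stream_map (cube n, C) dI (\<lambda>t. t i)"
    and V: "openin (cube n) V"
  shows "C V \<subseteq> segment_circ n V"
proof -
  obtain U where U: "\<And>z. z \<in> V \<Longrightarrow> (\<forall>i\<in>{..<n}. openin (top_of_set {0..1}) (U z i)) \<and>
                         z \<in> PiE {..<n} (U z) \<and> PiE {..<n} (U z) \<subseteq> V"
    using V unfolding cube_def openin_product_topology_alt by metis
  define \<O> where "\<O> = (\<lambda>z. PiE {..<n} (U z)) ` V"
  have opens: "openin (cube n) W" if "W \<in> \<O>" for W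
    using \<open>W \<in> \<O>\<close> U PiE_open_cube unfolding \<O>_def by auto
  have "\<Union>\<O> = V" unfolding \<O>_def using U by blast
  then have "C V = preorder_hull V (\<Union>W\<in>\<O>. C W)"
    using circ_union[OF C, of \<O>] opens by simp
  also have "\<dots> \<subseteq> segment_circ n V"
  proof (rule preorder_hull_least[OF segment_circ_preorder])
    show "(\<Union>W\<in>\<O>. C W) \<subseteq> segment_circ n V"
    proof
      fix p assume "p \<in> (\<Union>W\<in>\<O>. C W)"
      then obtain z where z: "z \<in> V" and "p \<in> C (PiE {..<n} (U z))" unfolding \<O>_def by blast
      moreover obtain a b where p: "p = (a, b)" by (cases p)
      ultimately have ab: "(a, b) \<in> C (PiE {..<n} (U z))" by simp
      have "(a, b) \<in> monotone_segments n (PiE {..<n} (U z))"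
        by (rule circ_box_directed[OF C proj _ ab]) (use U[OF z] in blast)
      then have "(a, b) \<in> monotone_segments n V" using monotone_segments_mono U[OF z] by blast
      then show "p \<in> segment_circ n V"
        unfolding p segment_circ_def by (rule subsetD[OF preorder_hull_incl])
    qed
  qed
  finally show ?thesis .
qed

lemma dcube_circ_props:
  "is_circulation (cube n) (dcube_circ n) \<and> (\<forall>i<n. stream_map (cube n, dcube_circ n) dI (\<lambda>t. t i)) \<and>
   (\<forall>C'. is_circulation (cube n) C' \<and> (\<forall>i<n. stream_map (cube n, C') dI (\<lambda>t. t i)) \<longrightarrow>
        (\<forall>V. openin (cube n) V \<longrightarrow> C' V \<subseteq> dcube_circ n V))"
  unfolding dcube_circ_def
  by (rule someI[of _ "segment_circ n"])
    (use segment_circ_circulation segment_circ_proj segment_circ_largest in blast)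

lemma dcube_circulation: "is_circulation (cube n) (dcube_circ n)"
  using dcube_circ_props by blast

lemma dcube_circ_eq:
  assumes "openin (cube n) V"
  shows "dcube_circ n V = segment_circ n V"
proof
  show "dcube_circ n V \<subseteq> segment_circ n V"
    using segment_circ_largest[OF dcube_circulation _ assms] dcube_circ_props by blast
  show "segment_circ n V \<subseteq> dcube_circ n V"
    using dcube_circ_props segment_circ_circulation segment_circ_proj assms by blast
qed

section \<open>Linear extensions shift the coordinate sum by an integer\<close>

text \<open>Every morphism of \<open>\<box>\<close> preserves lengths of vertices and raises the number of
  \<open>1\<close>-coordinates by a constant (the number of \<open>\<delta>\<^sub>+\<close> factors).\<close>
lemma box_mor_count:
  "(a, b, f) \<in> box_mor \<Longrightarrow>
     \<exists>c. \<forall>v. length v = a \<longrightarrow> length (f v) = b \<and> count_list (f v) True = count_list v True + c"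
proof (induction rule: box_mor.induct)
  case (prod a b f c d g)
  then obtain c1 c2 where
    c1: "\<forall>v. length v = a \<longrightarrow> length (f v) = b \<and> count_list (f v) True = count_list v True + c1" and
    c2: "\<forall>v. length v = c \<longrightarrow> length (g v) = d \<and> count_list (g v) True = count_list v True + c2"
    by blast
  let ?h = "restr (a + c) (\<lambda>v. f (take a v) @ g (drop a v))"
  have "length (?h v) = b + d \<and> count_list (?h v) True = count_list v True + (c1 + c2)"
    if v: "length v = a + c" for v
  proof -
    have l: "length (take a v) = a" "length (drop a v) = c" using v by auto
    have "count_list v True = count_list (take a v) True + count_list (drop a v) True"
      by (metis append_take_drop_id count_list_append)
    then show ?thesis using c1[rule_format, OF l(1)] c2[rule_format, OF l(2)] v
      by (simp add: restr_def)
  qed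
  then show ?case by blast
next
  case (comp a b f c g)
  then obtain c1 c2 where
    c1: "\<forall>v. length v = a \<longrightarrow> length (f v) = b \<and> count_list (f v) True = count_list v True + c1" and
    c2: "\<forall>v. length v = b \<longrightarrow> length (g v) = c \<and> count_list (g v) True = count_list v True + c2"
    by blast
  have "length (restr a (\<lambda>v. g (f v)) v) = c \<and>
        count_list (restr a (\<lambda>v. g (f v)) v) True = count_list v True + (c1 + c2)"
    if v: "length v = a" for v
    using c1[rule_format, OF v] c2[rule_format, of "f v"] v by (simp add: restr_def)
  then show ?case by blast
next
  case delta_plus
  show ?case by (intro exI[of _ 1]) (simp add: restr_def)
qed (intro exI[of _ 0]; simp add: restr_def)+

lemma count_list_True_sum: "(\<Sum>i<length l. if l ! i then 1 else 0 :: real) = real (count_list l True)"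
proof (induction l)
  case (Cons b l)
  show ?case unfolding length_Cons sum.lessThan_Suc_shift using Cons by simp
qed simp

definition vertex_weight :: "nat \<Rightarrow> (nat \<Rightarrow> real) \<Rightarrow> bool list \<Rightarrow> real" where
  "vertex_weight m t v = (\<Prod>j<m. if v ! j then t j else 1 - t j)"

lemma vertex_weight_Cons:
  "vertex_weight (Suc m) t (b # v) = (if b then t 0 else 1 - t 0) * vertex_weight m (\<lambda>j. t (Suc j)) v"
  unfolding vertex_weight_def prod.lessThan_Suc_shift by simp

lemma finite_vertices: "finite {v :: bool list. length v = m}"
  using finite_lists_length_eq[of "UNIV :: bool set" m] by simp

lemma sum_vertices_Suc:
  "(\<Sum>v\<in>{v :: bool list. length v = Suc m}. f v) = (\<Sum>v\<in>{v. length v = m}. f (True # v) + f (False # v))"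
proof -
  have "{v :: bool list. length v = Suc m} = Cons True ` {v. length v = m} \<union> Cons False ` {v. length v = m}"
    by (auto simp: length_Suc_conv)
  then have "(\<Sum>v\<in>{v :: bool list. length v = Suc m}. f v) =
        (\<Sum>v\<in>Cons True ` {v. length v = m}. f v) + (\<Sum>v\<in>Cons False ` {v. length v = m}. f v)"
    by (simp only:) (rule sum.union_disjoint; auto intro: finite_vertices)
  then show ?thesis by (simp add: sum.reindex sum.distrib)
qed

lemma sum_vertex_weight: "(\<Sum>v\<in>{v. length v = m}. vertex_weight m t v) = 1"
proof (induction m arbitrary: t)
  case 0
  have "{v :: bool list. length v = 0} = {[]}" by auto
  then show ?case by (simp add: vertex_weight_def)
next
  case (Suc m)
  then show ?case by (simp add: sum_vertices_Suc vertex_weight_Cons algebra_simps sum.distrib)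
qed

lemma sum_vertex_weight_count:
  "(\<Sum>v\<in>{v. length v = m}. vertex_weight m t v * real (count_list v True)) = (\<Sum>j<m. t j)"
proof (induction m arbitrary: t)
  case 0
  have "{v :: bool list. length v = 0} = {[]}" by auto
  then show ?case by (simp add: vertex_weight_def)
next
  case (Suc m)
  let ?t' = "\<lambda>j. t (Suc j)"
  have "(\<Sum>v\<in>{v. length v = Suc m}. vertex_weight (Suc m) t v * real (count_list v True)) =
        t 0 * (\<Sum>v\<in>{v. length v = m}. vertex_weight m ?t' v) +
        (\<Sum>v\<in>{v. length v = m}. vertex_weight m ?t' v * real (count_list v True))"
    by (simp add: sum_vertices_Suc vertex_weight_Cons algebra_simps sum.distrib sum_distrib_left)
  also have "\<dots> = t 0 + (\<Sum>j<m. ?t' j)"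
    using Suc.IH sum_vertex_weight by simp
  finally show ?case unfolding sum.lessThan_Suc_shift .
qed

lemma vertex_weight_nonneg: "(\<And>j. j < m \<Longrightarrow> t j \<in> {0..1}) \<Longrightarrow> 0 \<le> vertex_weight m t v"
  unfolding vertex_weight_def by (intro prod_nonneg) auto

lemma lin_ext_weight:
  "i < n \<Longrightarrow> lin_ext m n f t i = (\<Sum>v\<in>{v. length v = m}. vertex_weight m t v * (if f v ! i then 1 else 0))"
  unfolding lin_ext_def vertex_weight_def by simp

lemma sum_lin_ext:
  assumes "(m, n, f) \<in> box_mor"
  obtains c :: nat where "\<And>t. (\<Sum>i<n. lin_ext m n f t i) = (\<Sum>j<m. t j) + real c"
proof -
  obtain c where c: "\<forall>v. length v = m \<longrightarrow> length (f v) = n \<and> count_list (f v) True = count_list v True + c"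
    using box_mor_count[OF assms] by blast
  have "(\<Sum>i<n. lin_ext m n f t i) = (\<Sum>j<m. t j) + real c" for t
  proof -
    have "(\<Sum>i<n. lin_ext m n f t i) =
          (\<Sum>i<n. \<Sum>v\<in>{v. length v = m}. vertex_weight m t v * (if f v ! i then 1 else 0))"
      by (simp add: lin_ext_weight)
    also have "\<dots> = (\<Sum>v\<in>{v. length v = m}. vertex_weight m t v * (\<Sum>i<n. if f v ! i then 1 else 0))"
      by (subst sum.swap) (simp add: sum_distrib_left)
    also have "\<dots> = (\<Sum>v\<in>{v. length v = m}. vertex_weight m t v * (real (count_list v True) + real c))"
    proof (rule sum.cong)
      fix v assume "v \<in> {v :: bool list. length v = m}"
      then have "length (f v) = n" "count_list (f v) True = count_list v True + c" using c by auto
      then show "vertex_weight m t v * (\<Sum>i<n. if f v ! i then 1 else 0) =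
                 vertex_weight m t v * (real (count_list v True) + real c)"
        using count_list_True_sum[of "f v"] by simp
    qed simp
    also have "\<dots> = (\<Sum>v\<in>{v. length v = m}. vertex_weight m t v * real (count_list v True)) +
                    real c * (\<Sum>v\<in>{v. length v = m}. vertex_weight m t v)"
      by (simp add: algebra_simps sum.distrib sum_distrib_left)
    also have "\<dots> = (\<Sum>j<m. t j) + real c"
      using sum_vertex_weight_count sum_vertex_weight by simp
    finally show ?thesis .
  qed
  then show ?thesis using that by blast
qed

lemma lin_ext_cube:
  assumes "t \<in> topspace (cube m)"
  shows "lin_ext m n f t \<in> topspace (cube n)"
  unfolding topspace_cube
proof (rule PiE_I)
  fix i assume i: "i \<in> {..<n}"
  have t01: "\<And>j. j < m \<Longrightarrow> t j \<in> {0..1}" using assms by (auto simp: topspace_cube PiE_iff)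
  have "0 \<le> lin_ext m n f t i" using i
    by (simp add: lin_ext_weight) (intro sum_nonneg mult_nonneg_nonneg vertex_weight_nonneg[OF t01]; simp)
  moreover have "lin_ext m n f t i \<le> (\<Sum>v\<in>{v. length v = m}. vertex_weight m t v)" using i
    by (simp add: lin_ext_weight) (intro sum_mono; simp add: vertex_weight_nonneg[OF t01])
  ultimately show "lin_ext m n f t i \<in> {0..1}" using sum_vertex_weight by simp
next
  fix i assume "i \<notin> {..<n}"
  then show "lin_ext m n f t i = undefined" by (simp add: lin_ext_def)
qed

lemma equiv_Inter:
  assumes "F \<noteq> {}" "\<And>R. R \<in> F \<Longrightarrow> equiv A R"
  shows "equiv A (\<Inter>F)"
proof (rule equivI)
  obtain R0 where "R0 \<in> F" using assms(1) by blast
  then show "\<Inter>F \<subseteq> A \<times> A" using assms(2)[of R0] unfolding equiv_def by blast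
  show "refl_on A (\<Inter>F)" using assms(2) unfolding equiv_def refl_on_def by blast
  show "sym (\<Inter>F)" using assms(2) unfolding equiv_def sym_def by blast
  show "trans (\<Inter>F)" using assms(2) unfolding equiv_def trans_def by blast
qed

locale precubical =
  fixes B :: "'c precubical"
  assumes precubical: "precubical_set B"
begin

abbreviation pts :: "'c rpt set" where
  "pts \<equiv> cells B // coend_rel B"

lemma act_in: "(m, n, f) \<in> box_mor \<Longrightarrow> x \<in> fst B n \<Longrightarrow> snd B m n f x \<in> fst B m"
  using precubical unfolding precubical_set_def by blast

lemma coend_gen_field: "coend_gen B \<subseteq> cells B \<times> cells B"
proof
  fix p assume "p \<in> coend_gen B"
  then obtain m n f x t where p: "p = ((m, snd B m n f x, t), (n, x, lin_ext m n f t))"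
    and mor: "(m, n, f) \<in> box_mor" and x: "x \<in> fst B n" and t: "t \<in> topspace (cube m)"
    unfolding coend_gen_def by blast
  show "p \<in> cells B \<times> cells B"
    unfolding p cells_def using act_in[OF mor x] x t lin_ext_cube[OF t] by auto
qed

lemma coend_rel_equiv: "equiv (cells B) (coend_rel B)"
  unfolding coend_rel_def
proof (rule equiv_Inter)
  have "equiv (cells B) (cells B \<times> cells B)"
    by (rule equivI) (auto simp: refl_on_def sym_def trans_def)
  then show "{R. equiv (cells B) R \<and> coend_gen B \<subseteq> R} \<noteq> {}" using coend_gen_field by blast
qed blast

lemma coend_rel_least: "equiv (cells B) R \<Longrightarrow> coend_gen B \<subseteq> R \<Longrightarrow> coend_rel B \<subseteq> R"
  unfolding coend_rel_def by blast

lemma real_pt_in_pts: "x \<in> fst B n \<Longrightarrow> t \<in> topspace (cube n) \<Longrightarrow> real_pt B n x t \<in> pts"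
  unfolding real_pt_def by (rule quotientI) (simp add: cells_def)

lemma pts_cases:
  assumes "P \<in> pts"
  obtains n x t where "x \<in> fst B n" "t \<in> topspace (cube n)" "P = real_pt B n x t"
  using assms unfolding real_pt_def cells_def quotient_def by blast

lemma openin_real_top:
  "openin (real_top B) U \<longleftrightarrow> U \<subseteq> pts \<and>
     (\<forall>n. \<forall>x\<in>fst B n. openin (cube n) {t \<in> topspace (cube n). real_pt B n x t \<in> U})"
proof -
  let ?pre = "\<lambda>n x U. {t \<in> topspace (cube n). real_pt B n x t \<in> U}"
  have inter: "?pre n x (S \<inter> T) = ?pre n x S \<inter> ?pre n x T" for n x S T by blast
  have union: "?pre n x (\<Union>K) = \<Union>((\<lambda>S. ?pre n x S) ` K)" for n x K by blast
  have "istopology (\<lambda>U. U \<subseteq> pts \<and> (\<forall>n. \<forall>x\<in>fst B n. openin (cube n) (?pre n x U)))"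
    unfolding istopology_def inter union by (auto intro!: openin_Int openin_Union)
  then show ?thesis unfolding real_top_def by simp
qed

lemma topspace_real_top: "topspace (real_top B) = pts"
proof
  show "topspace (real_top B) \<subseteq> pts"
    unfolding topspace_def using openin_real_top by blast
  have "{t \<in> topspace (cube n). real_pt B n x t \<in> pts} = topspace (cube n)" if "x \<in> fst B n" for n x
    using real_pt_in_pts[OF that] by blast
  then have "openin (real_top B) pts" unfolding openin_real_top by simp
  then show "pts \<subseteq> topspace (real_top B)" by (rule openin_subset)
qed

lemma openin_cell_preimage:
  "openin (real_top B) U \<Longrightarrow> x \<in> fst B n \<Longrightarrow>
     openin (cube n) {z \<in> topspace (cube n). real_pt B n x z \<in> U}"
  unfolding openin_real_top by blast

lemma real_pt_cont: "x \<in> fst B n \<Longrightarrow> continuous_map (cube n) (real_top B) (real_pt B n x)"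
  unfolding continuous_map_def topspace_real_top
  using real_pt_in_pts by (auto simp: openin_real_top)

lemma continuous_map_from_real_top:
  assumes "\<And>n x. x \<in> fst B n \<Longrightarrow> continuous_map (cube n) Y (\<lambda>t. h (real_pt B n x t))"
  shows "continuous_map (real_top B) Y h"
  unfolding continuous_map_def
proof (intro conjI allI impI)
  show "h \<in> topspace (real_top B) \<rightarrow> topspace Y"
  proof
    fix P assume "P \<in> topspace (real_top B)"
    then obtain n x t where "x \<in> fst B n" "t \<in> topspace (cube n)" "P = real_pt B n x t"
      unfolding topspace_real_top by (rule pts_cases)
    then show "h P \<in> topspace Y" using assms[of x n] unfolding continuous_map_def by blast
  qed
  fix U assume U: "openin Y U"
  have "{t \<in> topspace (cube n). real_pt B n x t \<in> {P \<in> pts. h P \<in> U}} =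
        {t \<in> topspace (cube n). h (real_pt B n x t) \<in> U}" if "x \<in> fst B n" for n x
    using real_pt_in_pts[OF that] by blast
  then show "openin (real_top B) {P \<in> topspace (real_top B). h P \<in> U}"
    unfolding openin_real_top topspace_real_top
    using openin_continuous_map_preimage[OF assms U] by auto
qed

end

text \<open>The final circulation is generated by the images of the cube circulations under the
  characteristic maps.\<close>
definition cell_gen :: "'c precubical \<Rightarrow> 'c rpt set \<Rightarrow> ('c rpt \<times> 'c rpt) set" where
  "cell_gen B U = {(real_pt B n x s, real_pt B n x t) | n x s t. x \<in> fst B n \<and>
      (s, t) \<in> dcube_circ n {z \<in> topspace (cube n). real_pt B n x z \<in> U}}"

definition cell_circ :: "'c precubical \<Rightarrow> 'c rpt set \<Rightarrow> ('c rpt \<times> 'c rpt) set" where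
  "cell_circ B U = preorder_hull U (cell_gen B U)"

context precubical begin

lemma cell_genI:
  assumes "x \<in> fst B n" "(s, t) \<in> dcube_circ n {z \<in> topspace (cube n). real_pt B n x z \<in> U}"
  shows "(real_pt B n x s, real_pt B n x t) \<in> cell_gen B U"
  unfolding cell_gen_def using assms by blast

lemma cell_genE:
  assumes "p \<in> cell_gen B U"
  obtains n x s t where "p = (real_pt B n x s, real_pt B n x t)" "x \<in> fst B n"
    "(s, t) \<in> dcube_circ n {z \<in> topspace (cube n). real_pt B n x z \<in> U}"
  using assms unfolding cell_gen_def by blast

lemma cell_gen_field: "openin (real_top B) U \<Longrightarrow> cell_gen B U \<subseteq> U \<times> U"
  by (auto elim!: cell_genE dest!: preorder_on_field[OF circ_preorder[OF dcube_circulation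
        openin_cell_preimage]])

lemma cell_gen_mono:
  assumes "openin (real_top B) U" "openin (real_top B) W" "U \<subseteq> W"
  shows "cell_gen B U \<subseteq> cell_gen B W"
proof
  fix p assume "p \<in> cell_gen B U"
  then obtain n x s t where p: "p = (real_pt B n x s, real_pt B n x t)" "x \<in> fst B n"
    and st: "(s, t) \<in> dcube_circ n {z \<in> topspace (cube n). real_pt B n x z \<in> U}"
    by (rule cell_genE)
  have "dcube_circ n {z \<in> topspace (cube n). real_pt B n x z \<in> U} \<subseteq>
        dcube_circ n {z \<in> topspace (cube n). real_pt B n x z \<in> W}"
    by (rule circ_mono[OF dcube_circulation openin_cell_preimage[OF assms(1) p(2)]
          openin_cell_preimage[OF assms(2) p(2)]]) (use assms(3) in blast)
  then show "p \<in> cell_gen B W" using p st by (blast intro: cell_genI)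
qed

text \<open>Locality: pull the cover back to the cube, where the cube circulation is local,
  and push the resulting chain forward again.\<close>
lemma cell_gen_local:
  assumes opens: "\<And>V. V \<in> \<O> \<Longrightarrow> openin (real_top B) V"
  shows "cell_gen B (\<Union>\<O>) \<subseteq> preorder_hull (\<Union>\<O>) (\<Union>V\<in>\<O>. cell_gen B V)"
proof
  fix p assume "p \<in> cell_gen B (\<Union>\<O>)"
  then obtain n x s t where p: "p = (real_pt B n x s, real_pt B n x t)" and x: "x \<in> fst B n"
    and st: "(s, t) \<in> dcube_circ n {z \<in> topspace (cube n). real_pt B n x z \<in> \<Union>\<O>}"
    by (rule cell_genE)
  let ?pre = "\<lambda>V. {z \<in> topspace (cube n). real_pt B n x z \<in> V}"
  let ?R = "preorder_hull (\<Union>\<O>) (\<Union>V\<in>\<O>. cell_gen B V)"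
  have pre_open: "\<And>W. W \<in> ?pre ` \<O> \<Longrightarrow> openin (cube n) W"
    using openin_cell_preimage[OF opens x] by blast
  have "?pre (\<Union>\<O>) = \<Union>(?pre ` \<O>)" by blast
  then have "(s, t) \<in> preorder_hull (\<Union>(?pre ` \<O>)) (\<Union>W\<in>?pre ` \<O>. dcube_circ n W)"
    using st circ_union[OF dcube_circulation pre_open] by simp
  then show "p \<in> ?R" unfolding p
  proof (rule preorder_hull_map)
    show "(\<Union>W\<in>?pre ` \<O>. dcube_circ n W) \<subseteq> \<Union>(?pre ` \<O>) \<times> \<Union>(?pre ` \<O>)"
      by (rule circ_union_field[OF dcube_circulation pre_open])
    show "preorder_on (\<Union>\<O>) ?R"
      by (rule preorder_hull_preorder) (use cell_gen_field opens in blast)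
    show "real_pt B n x ` \<Union>(?pre ` \<O>) \<subseteq> \<Union>\<O>" by blast
    fix a b assume "(a, b) \<in> (\<Union>W\<in>?pre ` \<O>. dcube_circ n W)"
    then obtain V where "V \<in> \<O>" "(a, b) \<in> dcube_circ n (?pre V)" by blast
    then have "(real_pt B n x a, real_pt B n x b) \<in> (\<Union>V\<in>\<O>. cell_gen B V)"
      using cell_genI[OF x] by blast
    then show "(real_pt B n x a, real_pt B n x b) \<in> ?R" using preorder_hull_incl by blast
  qed
qed

lemma cell_circ_circulation: "is_circulation (real_top B) (cell_circ B)"
proof -
  have "is_circulation (real_top B) (\<lambda>U. preorder_hull U (cell_gen B U))"
    by (rule circulation_generatedI[OF cell_gen_field cell_gen_mono cell_gen_local])
  then show ?thesis unfolding cell_circ_def[abs_def] .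
qed

lemma cell_circ_map: "x \<in> fst B n \<Longrightarrow> stream_map (dcube n) (real_top B, cell_circ B) (real_pt B n x)"
  unfolding stream_map_def dcube_def fst_conv snd_conv cell_circ_def
  using real_pt_cont cell_genI preorder_hull_incl by blast

lemma cell_circ_least:
  assumes C: "is_circulation (real_top B) C"
    and maps: "\<forall>n. \<forall>x\<in>fst B n. stream_map (dcube n) (real_top B, C) (real_pt B n x)"
    and U: "openin (real_top B) U"
  shows "cell_circ B U \<subseteq> C U"
  unfolding cell_circ_def
proof (rule preorder_hull_least[OF circ_preorder[OF C U]])
  show "cell_gen B U \<subseteq> C U"
    using maps U unfolding stream_map_def dcube_def by (auto elim!: cell_genE)
qed

lemma real_circ_props:
  "is_circulation (real_top B) (real_circ B) \<and>
   (\<forall>n. \<forall>x\<in>fst B n. stream_map (dcube n) (real_top B, real_circ B) (real_pt B n x)) \<and>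
   (\<forall>C'. is_circulation (real_top B) C' \<and>
         (\<forall>n. \<forall>x\<in>fst B n. stream_map (dcube n) (real_top B, C') (real_pt B n x)) \<longrightarrow>
         (\<forall>V. openin (real_top B) V \<longrightarrow> real_circ B V \<subseteq> C' V))"
  unfolding real_circ_def
  by (rule someI[of _ "cell_circ B"]) (use cell_circ_circulation cell_circ_map cell_circ_least in blast)

lemma real_circ_circulation: "is_circulation (real_top B) (real_circ B)"
  using real_circ_props by blast

lemma real_circ_eq:
  assumes "openin (real_top B) U"
  shows "real_circ B U = cell_circ B U"
proof
  show "real_circ B U \<subseteq> cell_circ B U"
    using real_circ_props cell_circ_circulation cell_circ_map assms by blast
  show "cell_circ B U \<subseteq> real_circ B U"
    using cell_circ_least[OF real_circ_circulation _ assms] real_circ_props by blast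
qed

end

section \<open>The phase map \<open>|B| \<rightarrow> S\<^sup>1\<close>\<close>

text \<open>Since linear extensions of
  morphisms of \<open>\<box>\<close> shift the coordinate sum by an integer, it is compatible with the
  coend relation and descends to \<open>|B|\<close>.  Directed paths increase the coordinate sum,
  so lifting along the phase map yields a covering with a "height" function that strictly
  increases along directed paths.\<close>
definition cube_phase :: "nat \<Rightarrow> (nat \<Rightarrow> real) \<Rightarrow> complex" where
  "cube_phase n t = exp (\<i> * of_real (2 * pi * (\<Sum>i<n. t i)))"

lemma exp_2pi_shift: "exp (\<i> * of_real (2 * pi * (x + of_int k))) = exp (\<i> * of_real (2 * pi * x))"
proof -
  have "\<i> * of_real (2 * pi * (x + of_int k)) = \<i> * of_real (2 * pi * x) + (of_int (2 * k) * pi) * \<i>"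
    by (simp add: algebra_simps)
  then show ?thesis using exp_eq by blast
qed

lemma exp_2pi_eq_int:
  assumes "exp (\<i> * of_real (2 * pi * x)) = exp (\<i> * of_real (2 * pi * y))"
  shows "\<exists>k::int. x = y + of_int k"
proof -
  obtain k :: int where "\<i> * of_real (2 * pi * x) = \<i> * of_real (2 * pi * y) + (of_int (2 * k) * pi) * \<i>"
    using assms exp_eq by blast
  then have "Im (\<i> * of_real (2 * pi * x)) = Im (\<i> * of_real (2 * pi * y) + (of_int (2 * k) * pi) * \<i>)"
    by simp
  then have "(2 * pi) * (x - (y + of_int k)) = 0" by (simp add: algebra_simps)
  then have "x = y + of_int k" by simp
  then show ?thesis by blast
qed

lemma continuous_Ints_valued_constant:
  fixes f :: "'a::topological_space \<Rightarrow> real"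
  assumes "connected S" "continuous_on S f" "\<And>x. x \<in> S \<Longrightarrow> f x \<in> \<int>"
  shows "f constant_on S"
proof (rule continuous_discrete_range_constant[OF assms(1,2)])
  fix x assume "x \<in> S"
  show "\<exists>e>0. \<forall>y. y \<in> S \<and> f y \<noteq> f x \<longrightarrow> e \<le> norm (f y - f x)"
  proof (intro exI[of _ 1] conjI allI impI)
    fix y assume y: "y \<in> S \<and> f y \<noteq> f x"
    then have "f y - f x \<in> \<int>" "f y - f x \<noteq> 0" using assms(3) \<open>x \<in> S\<close> by auto
    then show "1 \<le> norm (f y - f x)" by (simp add: Ints_nonzero_abs_ge1)
  qed simp
qed

lemma cube_phase_lin_ext:
  assumes "(m, n, f) \<in> box_mor"
  shows "cube_phase n (lin_ext m n f t) = cube_phase m t"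
proof -
  obtain c :: nat where c: "\<And>t. (\<Sum>i<n. lin_ext m n f t i) = (\<Sum>j<m. t j) + real c"
    using sum_lin_ext[OF assms] by blast
  show ?thesis
    unfolding cube_phase_def c using exp_2pi_shift[of "\<Sum>j<m. t j" "int c"] by simp
qed

lemma cube_phase_cont: "continuous_map (cube n) euclidean (cube_phase n)"
proof -
  have s: "continuous_map (cube n) euclideanreal (\<lambda>t. \<Sum>i<n. t i)"
  proof (intro continuous_map_sum)
    fix i assume "i \<in> {..<n}"
    then show "continuous_map (cube n) euclideanreal (\<lambda>t. t i)"
      using proj_cont[of i n] unfolding continuous_map_in_subtopology by simp
  qed simp
  have e: "continuous_map euclideanreal euclidean (\<lambda>r. exp (\<i> * of_real (2 * pi * r)))"
    unfolding continuous_map_iff_continuous2 by (intro continuous_intros)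
  show ?thesis using continuous_map_compose[OF s e] unfolding cube_phase_def o_def .
qed

context precubical begin

lemma coend_rel_phase:
  assumes "(a, b) \<in> coend_rel B"
  shows "cube_phase (fst a) (snd (snd a)) = cube_phase (fst b) (snd (snd b))"
proof -
  define R where "R = {(a, b). a \<in> cells B \<and> b \<in> cells B \<and>
                        cube_phase (fst a) (snd (snd a)) = cube_phase (fst b) (snd (snd b))}"
  have "equiv (cells B) R"
    by (rule equivI) (auto simp: R_def refl_on_def sym_def trans_def)
  moreover have "coend_gen B \<subseteq> R"
  proof
    fix p assume p: "p \<in> coend_gen B"
    then have "p \<in> cells B \<times> cells B" using coend_gen_field by blast
    moreover obtain m n f x t where "p = ((m, snd B m n f x, t), (n, x, lin_ext m n f t))"
      and "(m, n, f) \<in> box_mor" using p unfolding coend_gen_def by blast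
    ultimately show "p \<in> R" unfolding R_def using cube_phase_lin_ext by auto
  qed
  ultimately show ?thesis using coend_rel_least assms unfolding R_def by blast
qed

definition phase :: "'c rpt \<Rightarrow> complex" where
  "phase P = cube_phase (fst (SOME a. a \<in> P)) (snd (snd (SOME a. a \<in> P)))"

lemma phase_real_pt:
  assumes "x \<in> fst B n" "t \<in> topspace (cube n)"
  shows "phase (real_pt B n x t) = cube_phase n t"
proof -
  have "(n, x, t) \<in> real_pt B n x t" unfolding real_pt_def
    by (rule equiv_class_self[OF coend_rel_equiv]) (use assms in \<open>simp add: cells_def\<close>)
  then have "(SOME a. a \<in> real_pt B n x t) \<in> real_pt B n x t" by (rule someI)
  then have "((n, x, t), SOME a. a \<in> real_pt B n x t) \<in> coend_rel B" unfolding real_pt_def by simp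
  from coend_rel_phase[OF this] show ?thesis unfolding phase_def by simp
qed

lemma phase_cont: "continuous_map (real_top B) euclidean phase"
  by (rule continuous_map_from_real_top, rule continuous_map_eq[OF cube_phase_cont])
    (simp add: phase_real_pt)

lemma norm_phase: "P \<in> pts \<Longrightarrow> norm (phase P) = 1"
  by (erule pts_cases) (simp add: phase_real_pt cube_phase_def)

text \<open>Local logarithms of the phase: on the open set \<open>slit a\<close>, where the phase avoids
  \<open>-exp (2\<pi>ia)\<close>, the continuous function \<open>local_log a\<close> satisfies
  \<open>phase = exp (2\<pi>i \<cdot> local_log a)\<close>.\<close>
definition rot :: "real \<Rightarrow> complex" where
  "rot a = exp (- (\<i> * of_real (2 * pi * a)))"

definition slit :: "real \<Rightarrow> 'c rpt set" where
  "slit a = {P \<in> pts. phase P * rot a \<notin> \<real>\<^sub>\<le>\<^sub>0}"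

definition local_log :: "real \<Rightarrow> 'c rpt \<Rightarrow> real" where
  "local_log a P = a + Arg (phase P * rot a) / (2 * pi)"

lemma slit_pts: "slit a \<subseteq> pts"
  unfolding slit_def by blast

lemma phase_rot_cont: "continuous_map (real_top B) euclidean (\<lambda>P. phase P * rot a)"
  using continuous_map_compose[OF phase_cont, of euclidean "\<lambda>z. z * rot a"]
  unfolding continuous_map_iff_continuous2 o_def by (simp add: continuous_on_mult_right)

lemma slit_open: "openin (real_top B) (slit a)"
proof -
  have "openin euclidean (- \<real>\<^sub>\<le>\<^sub>0 :: complex set)" by (simp add: open_Compl)
  from openin_continuous_map_preimage[OF phase_rot_cont this]
  show ?thesis unfolding slit_def topspace_real_top by simp
qed

lemma slit_cover: "pts = slit 0 \<union> slit (1/2)"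
proof
  show "slit 0 \<union> slit (1/2) \<subseteq> pts" using slit_pts by blast
  show "pts \<subseteq> slit 0 \<union> slit (1/2)"
  proof
    fix P assume P: "P \<in> pts"
    show "P \<in> slit 0 \<union> slit (1/2)"
    proof (cases "phase P \<in> \<real>\<^sub>\<le>\<^sub>0")
      case False
      then show ?thesis using P unfolding slit_def rot_def by simp
    next
      case True
      then obtain r where r: "phase P = of_real r" "r \<le> 0" by (auto elim!: nonpos_Reals_cases)
      then have "phase P = -1" using norm_phase[OF P] by (simp add: abs_if split: if_splits)
      moreover have "rot (1/2) = -1" unfolding rot_def by (simp add: exp_minus mult.commute)
      ultimately show ?thesis using P unfolding slit_def by simp
    qed
  qed
qed

lemma norm_rot [simp]: "norm (rot a) = 1"
proof -
  have "rot a = exp (\<i> * of_real (- (2 * pi * a)))" unfolding rot_def by simp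
  then show ?thesis by (simp only: norm_exp_i_times)
qed

lemma local_log_exp:
  assumes "P \<in> pts"
  shows "exp (\<i> * of_real (2 * pi * local_log a P)) = phase P"
proof -
  define w where "w = phase P * rot a"
  have "norm w = 1" unfolding w_def using norm_phase[OF assms] by (simp add: norm_mult)
  then have "w \<noteq> 0" by auto
  then have "w = of_real (norm w) * exp (\<i> * of_real (Arg w))" by (rule Arg_eq)
  then have w: "exp (\<i> * of_real (Arg w)) = w" using \<open>norm w = 1\<close> by simp
  have "\<i> * of_real (2 * pi * local_log a P) = \<i> * of_real (2 * pi * a) + \<i> * of_real (Arg w)"
    unfolding local_log_def w_def by (simp add: algebra_simps)
  then have "exp (\<i> * of_real (2 * pi * local_log a P)) = exp (\<i> * of_real (2 * pi * a)) * w"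
    using w by (simp add: exp_add)
  also have "\<dots> = phase P * (exp (\<i> * of_real (2 * pi * a)) * rot a)"
    unfolding w_def by (simp add: algebra_simps)
  also have "exp (\<i> * of_real (2 * pi * a)) * rot a = 1" unfolding rot_def by (simp add: exp_minus)
  finally show ?thesis by simp
qed

lemma local_log_cont: "continuous_map (subtopology (real_top B) (slit a)) euclideanreal (local_log a)"
proof -
  have w: "continuous_map (subtopology (real_top B) (slit a)) (top_of_set (- \<real>\<^sub>\<le>\<^sub>0)) (\<lambda>P. phase P * rot a)"
    unfolding continuous_map_in_subtopology
    using continuous_map_from_subtopology[OF phase_rot_cont] by (auto simp: slit_def)
  have "continuous_map (top_of_set (- \<real>\<^sub>\<le>\<^sub>0)) euclideanreal (\<lambda>z. a + Arg z / (2 * pi))"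
    unfolding continuous_map_iff_continuous by (intro continuous_intros continuous_on_Arg) auto
  from continuous_map_compose[OF w this] show ?thesis unfolding local_log_def by (simp add: o_def)
qed

end

section \<open>The covering space\<close>

text \<open>The total space consists of pairs \<open>(P, r)\<close> with \<open>phase P = exp (2\<pi>ir)\<close>, i.e. the
  pullback of the exponential covering \<open>\<real> \<rightarrow> S\<^sup>1\<close> along the phase map.  The real
  coordinate \<open>r\<close> is stored injectively in the carrier type prescribed by the theorem.\<close>
definition real_code :: "real \<Rightarrow> (real \<Rightarrow> 'a set) set" where
  "real_code r = {\<lambda>s. if s = r then UNIV else {}}"

lemma inj_real_code: "inj (real_code :: real \<Rightarrow> (real \<Rightarrow> 'a set) set)"
proof (rule injI)
  fix r r' :: real assume "real_code r = (real_code r' :: (real \<Rightarrow> 'a set) set)"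
  then have "(\<lambda>s::real. if s = r then (UNIV::'a set) else {}) = (\<lambda>s. if s = r' then UNIV else {})"
    unfolding real_code_def by simp
  from fun_cong[OF this, of r] show "r = r'" by (auto split: if_splits)
qed

definition real_decode :: "(real \<Rightarrow> 'a set) set \<Rightarrow> real" where
  "real_decode = inv real_code"

lemma real_decode_code [simp]: "real_decode (real_code r) = r"
  unfolding real_decode_def by (rule inv_f_f[OF inj_real_code])

context precubical begin

definition lift_space :: "('c rpt \<times> (real \<Rightarrow> 'c rpt) set) set" where
  "lift_space = {(P, real_code r) | P r. P \<in> pts \<and> phase P = exp (\<i> * of_real (2 * pi * r))}"

definition height :: "'c rpt \<times> (real \<Rightarrow> 'c rpt) set \<Rightarrow> real" where
  "height e = real_decode (snd e)"

definition lift_top :: "('c rpt \<times> (real \<Rightarrow> 'c rpt) set) topology" where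
  "lift_top = pullback_topology lift_space (\<lambda>e. (fst e, height e)) (prod_topology (real_top B) euclideanreal)"

text \<open>Over \<open>slit a\<close> the covering is trivial: its sheets are the graphs of the local
  logarithms shifted by integers, with continuous sections \<open>sheet_section a k\<close>.\<close>
definition sheet :: "real \<Rightarrow> int \<Rightarrow> ('c rpt \<times> (real \<Rightarrow> 'c rpt) set) set" where
  "sheet a k = {e \<in> lift_space. fst e \<in> slit a \<and> height e = local_log a (fst e) + of_int k}"

definition sheet_section :: "real \<Rightarrow> int \<Rightarrow> 'c rpt \<Rightarrow> 'c rpt \<times> (real \<Rightarrow> 'c rpt) set" where
  "sheet_section a k P = (P, real_code (local_log a P + of_int k))"

lemma lift_space_iff:
  "e \<in> lift_space \<longleftrightarrow>
     fst e \<in> pts \<and> snd e = real_code (height e) \<and> phase (fst e) = exp (\<i> * of_real (2 * pi * height e))"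
proof
  assume "e \<in> lift_space"
  then show "fst e \<in> pts \<and> snd e = real_code (height e) \<and> phase (fst e) = exp (\<i> * of_real (2 * pi * height e))"
    unfolding lift_space_def height_def by auto
next
  assume e: "fst e \<in> pts \<and> snd e = real_code (height e) \<and> phase (fst e) = exp (\<i> * of_real (2 * pi * height e))"
  then have "e = (fst e, real_code (height e))" by (metis prod.collapse)
  then show "e \<in> lift_space" unfolding lift_space_def using e by blast
qed

lemma topspace_lift_top: "topspace lift_top = lift_space"
  unfolding lift_top_def topspace_pullback_topology topspace_real_top
  using lift_space_iff by (auto simp: topspace_real_top)

lemma sheet_sub: "sheet a k \<subseteq> lift_space"
  unfolding sheet_def by blast

lemma sheet_section_in_sheet:
  assumes "P \<in> slit a"
  shows "sheet_section a k P \<in> sheet a k"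
proof -
  have P: "P \<in> pts" using assms slit_pts by blast
  have "phase P = exp (\<i> * of_real (2 * pi * (local_log a P + of_int k)))"
    using local_log_exp[OF P] exp_2pi_shift by simp
  then show ?thesis
    unfolding sheet_def lift_space_def sheet_section_def height_def using P assms by auto
qed

lemma fst_sheet_section [simp]: "fst (sheet_section a k P) = P"
  by (simp add: sheet_section_def)

lemma sheet_section_fst: "e \<in> sheet a k \<Longrightarrow> sheet_section a k (fst e) = e"
  unfolding sheet_def sheet_section_def using lift_space_iff by (metis (mono_tags, lifting) mem_Collect_eq prod.collapse)

lemma fst_sheet: "fst ` sheet a k = slit a"
proof
  show "fst ` sheet a k \<subseteq> slit a" unfolding sheet_def by blast
  show "slit a \<subseteq> fst ` sheet a k"
    using sheet_section_in_sheet fst_sheet_section by (metis image_eqI subsetI)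
qed

lemma height_local_log:
  assumes "e \<in> lift_space" "fst e \<in> slit a"
  shows "\<exists>k::int. height e = local_log a (fst e) + of_int k"
  using assms(1) local_log_exp[of "fst e" a] lift_space_iff by (auto intro: exp_2pi_eq_int)

lemma sheets_cover: "{e \<in> lift_space. fst e \<in> slit a} = (\<Union>k. sheet a k)"
  using height_local_log unfolding sheet_def by blast

lemma sheets_disjoint: "k \<noteq> k' \<Longrightarrow> sheet a k \<inter> sheet a k' = {}"
  unfolding sheet_def by auto

lemma fst_cont: "continuous_map lift_top (real_top B) fst"
proof -
  have "continuous_map lift_top (real_top B) (fst \<circ> (\<lambda>e. (fst e, height e)))"
    unfolding lift_top_def by (rule continuous_map_pullback[OF continuous_map_fst])
  then show ?thesis by (simp add: o_def)
qed

lemma sheet_section_cont: "continuous_map (subtopology (real_top B) (slit a)) lift_top (sheet_section a k)"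
  unfolding lift_top_def
proof (rule continuous_map_pullback')
  have "continuous_map (subtopology (real_top B) (slit a)) (prod_topology (real_top B) euclideanreal)
          (\<lambda>P. (P, local_log a P + of_int k))"
    using continuous_map_from_subtopology[OF continuous_map_id[unfolded id_def]]
      continuous_map_add[OF local_log_cont continuous_map_const[THEN iffD2]]
    by (intro continuous_map_pairedI) auto
  then show "continuous_map (subtopology (real_top B) (slit a)) (prod_topology (real_top B) euclideanreal)
               ((\<lambda>e. (fst e, height e)) \<circ> sheet_section a k)"
    by (simp add: o_def sheet_section_def height_def)
  show "topspace (subtopology (real_top B) (slit a)) \<subseteq> sheet_section a k -` lift_space"
  proof
    fix P assume "P \<in> topspace (subtopology (real_top B) (slit a))"
    then have "P \<in> slit a" by simp
    then show "P \<in> sheet_section a k -` lift_space"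
      using sheet_section_in_sheet[of P a k] sheet_sub[of a k] by blast
  qed
qed

text \<open>A sheet is the preimage of an open band of width 1 around the graph of
  \<open>local_log a + k\<close>, hence open.\<close>
lemma sheet_open: "openin lift_top (sheet a k)"
proof -
  let ?Y = "prod_topology (real_top B) euclideanreal" and ?S = "slit a \<times> (UNIV :: real set)"
  have S: "openin ?Y ?S" unfolding openin_prod_Times_iff using slit_open by simp
  have "subtopology ?Y ?S = prod_topology (subtopology (real_top B) (slit a)) euclideanreal"
    unfolding subtopology_Times by simp
  then have cont: "continuous_map (subtopology ?Y ?S) euclideanreal (\<lambda>x. snd x - local_log a (fst x) - of_int k)"
    by (simp, intro continuous_map_diff continuous_map_snd continuous_map_const[THEN iffD2]
        continuous_map_compose[OF continuous_map_fst local_log_cont, unfolded o_def]) simp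
  define band where "band = {x \<in> topspace (subtopology ?Y ?S). snd x - local_log a (fst x) - of_int k \<in> {-1/2<..<1/2}}"
  have "openin (subtopology ?Y ?S) band"
    unfolding band_def by (rule openin_continuous_map_preimage[OF cont]) simp
  then have band_open: "openin ?Y band" using S by (rule openin_trans_full)
  have "sheet a k = (\<lambda>e. (fst e, height e)) -` band \<inter> lift_space"
  proof
    show "sheet a k \<subseteq> (\<lambda>e. (fst e, height e)) -` band \<inter> lift_space"
      unfolding sheet_def band_def using slit_pts by (auto simp: topspace_real_top)
    show "(\<lambda>e. (fst e, height e)) -` band \<inter> lift_space \<subseteq> sheet a k"
    proof
      fix e assume e: "e \<in> (\<lambda>e. (fst e, height e)) -` band \<inter> lift_space"
      then have e1: "e \<in> lift_space" "fst e \<in> slit a"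
        and e2: "-1/2 < height e - local_log a (fst e) - of_int k"
                "height e - local_log a (fst e) - of_int k < 1/2"
        unfolding band_def by auto
      obtain j :: int where j: "height e = local_log a (fst e) + of_int j"
        using height_local_log[OF e1] by blast
      then have "real_of_int (-1) < real_of_int (j - k)" "real_of_int (j - k) < real_of_int 1"
        using e2 by simp_all
      then have "j = k" by (simp only: of_int_less_iff)
      then show "e \<in> sheet a k" unfolding sheet_def using e1 j by blast
    qed
  qed
  then show ?thesis unfolding lift_top_def openin_pullback_topology using band_open by blast
qed

lemma fst_sheet_open:
  assumes "openin lift_top V"
  shows "openin (real_top B) (fst ` (V \<inter> sheet a k))"
proof -
  have "fst ` (V \<inter> sheet a k) = {P \<in> topspace (subtopology (real_top B) (slit a)). sheet_section a k P \<in> V}"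
  proof
    show "fst ` (V \<inter> sheet a k) \<subseteq> {P \<in> topspace (subtopology (real_top B) (slit a)). sheet_section a k P \<in> V}"
    proof
      fix P assume "P \<in> fst ` (V \<inter> sheet a k)"
      then obtain e where e: "e \<in> V" "e \<in> sheet a k" "P = fst e" by blast
      then have "sheet_section a k P = e" using sheet_section_fst by blast
      moreover have "P \<in> slit a" using e fst_sheet by blast
      ultimately show "P \<in> {P \<in> topspace (subtopology (real_top B) (slit a)). sheet_section a k P \<in> V}"
        using e(1) slit_pts by (auto simp: topspace_real_top)
    qed
    show "{P \<in> topspace (subtopology (real_top B) (slit a)). sheet_section a k P \<in> V} \<subseteq> fst ` (V \<inter> sheet a k)"
    proof
      fix P assume P: "P \<in> {P \<in> topspace (subtopology (real_top B) (slit a)). sheet_section a k P \<in> V}"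
      then have "sheet_section a k P \<in> V \<inter> sheet a k" using sheet_section_in_sheet by auto
      then show "P \<in> fst ` (V \<inter> sheet a k)" using fst_sheet_section by (metis image_eqI)
    qed
  qed
  moreover have "openin (subtopology (real_top B) (slit a))
      {P \<in> topspace (subtopology (real_top B) (slit a)). sheet_section a k P \<in> V}"
    by (rule openin_continuous_map_preimage[OF sheet_section_cont assms])
  ultimately show ?thesis using slit_open by (metis openin_trans_full)
qed

end

definition (in precubical) lift_gen ::
  "('c rpt \<times> (real \<Rightarrow> 'c rpt) set) set \<Rightarrow> (('c rpt \<times> (real \<Rightarrow> 'c rpt) set) \<times> ('c rpt \<times> (real \<Rightarrow> 'c rpt) set)) set"
  where "lift_gen V = {(e1, e2). \<exists>a k. e1 \<in> V \<inter> sheet a k \<and> e2 \<in> V \<inter> sheet a k \<and>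
                                     (fst e1, fst e2) \<in> real_circ B (fst ` (V \<inter> sheet a k))}"

definition (in precubical) lift_circ ::
  "('c rpt \<times> (real \<Rightarrow> 'c rpt) set) set \<Rightarrow> (('c rpt \<times> (real \<Rightarrow> 'c rpt) set) \<times> ('c rpt \<times> (real \<Rightarrow> 'c rpt) set)) set"
  where "lift_circ V = preorder_hull V (lift_gen V)"

context precubical begin

lemma lift_genI:
  "e1 \<in> V \<inter> sheet a k \<Longrightarrow> e2 \<in> V \<inter> sheet a k \<Longrightarrow>
   (fst e1, fst e2) \<in> real_circ B (fst ` (V \<inter> sheet a k)) \<Longrightarrow> (e1, e2) \<in> lift_gen V"
  unfolding lift_gen_def by blast

lemma lift_gen_field: "lift_gen V \<subseteq> V \<times> V"
  unfolding lift_gen_def by blast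

lemma lift_gen_mono:
  assumes "openin lift_top V" "openin lift_top V'" "V \<subseteq> V'"
  shows "lift_gen V \<subseteq> lift_gen V'"
proof
  fix p assume "p \<in> lift_gen V"
  then obtain e1 e2 a k where p: "p = (e1, e2)" "e1 \<in> V \<inter> sheet a k" "e2 \<in> V \<inter> sheet a k"
    "(fst e1, fst e2) \<in> real_circ B (fst ` (V \<inter> sheet a k))"
    unfolding lift_gen_def by blast
  have "real_circ B (fst ` (V \<inter> sheet a k)) \<subseteq> real_circ B (fst ` (V' \<inter> sheet a k))"
    by (rule circ_mono[OF real_circ_circulation fst_sheet_open[OF assms(1)] fst_sheet_open[OF assms(2)]])
      (use assms(3) in blast)
  then show "p \<in> lift_gen V'"
    using p assms(3) lift_genI[of e1 V' a k e2] by blast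
qed

text \<open>Locality: a generator over \<open>\<Union>\<O>\<close> lies in one sheet; project the cover to \<open>|B|\<close>,
  decompose there, and lift back with the section of that sheet.\<close>
lemma lift_gen_local:
  assumes opens: "\<And>V. V \<in> \<O> \<Longrightarrow> openin lift_top V"
  shows "lift_gen (\<Union>\<O>) \<subseteq> preorder_hull (\<Union>\<O>) (\<Union>V\<in>\<O>. lift_gen V)"
proof
  fix p assume "p \<in> lift_gen (\<Union>\<O>)"
  then obtain e1 e2 a k where p: "p = (e1, e2)" "e1 \<in> \<Union>\<O> \<inter> sheet a k" "e2 \<in> \<Union>\<O> \<inter> sheet a k"
    and base: "(fst e1, fst e2) \<in> real_circ B (fst ` (\<Union>\<O> \<inter> sheet a k))"
    unfolding lift_gen_def by blast
  let ?g = "sheet_section a k" and ?proj = "\<lambda>V. fst ` (V \<inter> sheet a k)"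
  let ?R = "preorder_hull (\<Union>\<O>) (\<Union>V\<in>\<O>. lift_gen V)"
  have proj_open: "\<And>W. W \<in> ?proj ` \<O> \<Longrightarrow> openin (real_top B) W"
    using fst_sheet_open opens by blast
  have "?proj (\<Union>\<O>) = \<Union>(?proj ` \<O>)" by blast
  then have "(fst e1, fst e2) \<in> preorder_hull (\<Union>(?proj ` \<O>)) (\<Union>W\<in>?proj ` \<O>. real_circ B W)"
    using base circ_union[OF real_circ_circulation proj_open] by simp
  then have "(?g (fst e1), ?g (fst e2)) \<in> ?R"
  proof (rule preorder_hull_map)
    show "(\<Union>W\<in>?proj ` \<O>. real_circ B W) \<subseteq> \<Union>(?proj ` \<O>) \<times> \<Union>(?proj ` \<O>)"
      by (rule circ_union_field[OF real_circ_circulation proj_open])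
    show "preorder_on (\<Union>\<O>) ?R"
      by (rule preorder_hull_preorder) (use lift_gen_field in blast)
    show "?g ` \<Union>(?proj ` \<O>) \<subseteq> \<Union>\<O>" using sheet_section_fst by fastforce
    fix u v assume "(u, v) \<in> (\<Union>W\<in>?proj ` \<O>. real_circ B W)"
    then obtain V where V: "V \<in> \<O>" and uv: "(u, v) \<in> real_circ B (?proj V)" by blast
    have "u \<in> ?proj V" "v \<in> ?proj V"
      using preorder_on_field[OF circ_preorder[OF real_circ_circulation proj_open] uv] V by auto
    then have "?g u \<in> V \<inter> sheet a k" "?g v \<in> V \<inter> sheet a k" using sheet_section_fst by auto
    then have "(?g u, ?g v) \<in> lift_gen V" using uv by (intro lift_genI) auto
    then show "(?g u, ?g v) \<in> ?R" using V preorder_hull_incl by blast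
  qed
  then show "p \<in> ?R" using p sheet_section_fst by simp
qed

lemma lift_circ_circulation: "is_circulation lift_top lift_circ"
proof -
  have "is_circulation lift_top (\<lambda>V. preorder_hull V (lift_gen V))"
    by (rule circulation_generatedI[OF lift_gen_field lift_gen_mono lift_gen_local])
  then show ?thesis unfolding lift_circ_def[abs_def] .
qed

lemma lift_circ_fst:
  assumes V': "openin lift_top V'" and V: "openin (real_top B) V" and sub: "fst ` V' \<subseteq> V"
    and xy: "(x, y) \<in> lift_circ V'"
  shows "(fst x, fst y) \<in> real_circ B V"
  using xy unfolding lift_circ_def
proof (rule preorder_hull_map[OF _ lift_gen_field circ_preorder[OF real_circ_circulation V] sub])
  fix e1 e2 assume "(e1, e2) \<in> lift_gen V'"
  then obtain a k where e: "e1 \<in> V' \<inter> sheet a k" "e2 \<in> V' \<inter> sheet a k"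
    "(fst e1, fst e2) \<in> real_circ B (fst ` (V' \<inter> sheet a k))"
    unfolding lift_gen_def by blast
  have "real_circ B (fst ` (V' \<inter> sheet a k)) \<subseteq> real_circ B V"
    by (rule circ_mono[OF real_circ_circulation fst_sheet_open[OF V'] V]) (use sub in blast)
  then show "(fst e1, fst e2) \<in> real_circ B V" using e by blast
qed

lemma lift_circ_section:
  assumes V': "openin lift_top V'" and sub: "V' \<subseteq> sheet a k"
    and pq: "(p, q) \<in> real_circ B (fst ` V')"
  shows "(sheet_section a k p, sheet_section a k q) \<in> lift_circ V'"
proof -
  have eq: "fst ` V' = fst ` (V' \<inter> sheet a k)" using sub by blast
  have "openin (real_top B) (fst ` V')" unfolding eq by (rule fst_sheet_open[OF V'])
  then have "p \<in> fst ` V'" "q \<in> fst ` V'"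
    using preorder_on_field[OF circ_preorder[OF real_circ_circulation] pq] by auto
  then have "sheet_section a k p \<in> V' \<inter> sheet a k" "sheet_section a k q \<in> V' \<inter> sheet a k"
    using sub sheet_section_fst by auto
  then have "(sheet_section a k p, sheet_section a k q) \<in> lift_gen V'"
    using pq eq by (intro lift_genI) auto
  then show ?thesis unfolding lift_circ_def using preorder_hull_incl by blast
qed

end

section \<open>Directed paths increase the height\<close>

context precubical begin

lemma local_log_cell_Ints:
  assumes x: "x \<in> fst B n" and z: "z \<in> topspace (cube n)" "real_pt B n x z \<in> slit a"
  shows "local_log a (real_pt B n x z) - (\<Sum>i<n. z i) \<in> \<int>"
proof -
  have "exp (\<i> * of_real (2 * pi * local_log a (real_pt B n x z))) = phase (real_pt B n x z)"
    using local_log_exp slit_pts z(2) by blast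
  also have "\<dots> = exp (\<i> * of_real (2 * pi * (\<Sum>i<n. z i)))"
    unfolding phase_real_pt[OF x z(1)] cube_phase_def ..
  finally obtain k :: int where "local_log a (real_pt B n x z) = (\<Sum>i<n. z i) + of_int k"
    using exp_2pi_eq_int by blast
  then show ?thesis by simp
qed

text \<open>Along a directed segment of a cell inside \<open>slit a\<close>, the local logarithm of the
  phase changes exactly by the change of the coordinate sum: their difference is a
  continuous integer-valued function on the segment.\<close>
lemma local_log_segment:
  assumes x: "x \<in> fst B n"
    and st: "(s, t) \<in> monotone_segments n {z \<in> topspace (cube n). real_pt B n x z \<in> slit a}"
  shows "local_log a (real_pt B n x t) - local_log a (real_pt B n x s) = (\<Sum>i<n. t i) - (\<Sum>i<n. s i)"
proof -
  let ?pre = "{z \<in> topspace (cube n). real_pt B n x z \<in> slit a}"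
  have path: "\<And>\<tau>. \<tau> \<in> {0..1} \<Longrightarrow> lin_path s t \<tau> \<in> ?pre"
    using st unfolding monotone_segments_def by auto
  have s_t: "s \<in> topspace (cube n)" "t \<in> topspace (cube n)" using path[of 0] path[of 1] by auto
  define f where "f = (\<lambda>\<tau>. local_log a (real_pt B n x (lin_path s t \<tau>)) - (\<Sum>i<n. lin_path s t \<tau> i))"
  have c1: "continuous_map (top_of_set {0..1}) (subtopology (real_top B) (slit a))
              (\<lambda>\<tau>. real_pt B n x (lin_path s t \<tau>))"
    using continuous_map_compose[OF lin_path_cont[OF s_t] real_pt_cont[OF x]] path
    unfolding continuous_map_in_subtopology by (auto simp: o_def)
  have c2: "continuous_map (top_of_set {0..1}) euclideanreal (\<lambda>\<tau>. \<Sum>i<n. lin_path s t \<tau> i)"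
    unfolding continuous_map_iff_continuous lin_path_def by (intro continuous_intros)
  have "continuous_on {0..1} f"
    using continuous_map_diff[OF continuous_map_compose[OF c1 local_log_cont, unfolded o_def] c2]
    unfolding f_def continuous_map_iff_continuous .
  moreover have "f \<tau> \<in> \<int>" if "\<tau> \<in> {0..1}" for \<tau>
    unfolding f_def using local_log_cell_Ints[OF x] path[OF that] by blast
  ultimately have "f constant_on {0..1}"
    by (intro continuous_Ints_valued_constant connected_Icc)
  then have "f 0 = f 1" unfolding constant_on_def by force
  then show ?thesis unfolding f_def by simp
qed

lemma local_log_cell:
  assumes x: "x \<in> fst B n"
    and st: "(s, t) \<in> dcube_circ n {z \<in> topspace (cube n). real_pt B n x z \<in> slit a}"
  shows "coord_le n s t \<and>
    local_log a (real_pt B n x t) - local_log a (real_pt B n x s) = (\<Sum>i<n. t i) - (\<Sum>i<n. s i)"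
proof -
  let ?pre = "{z \<in> topspace (cube n). real_pt B n x z \<in> slit a}"
  have "(s, t) \<in> preorder_hull ?pre (monotone_segments n ?pre)"
    using st dcube_circ_eq[OF openin_cell_preimage[OF slit_open x]] unfolding segment_circ_def by simp
  from this monotone_segments_field show ?thesis
  proof (induction rule: preorder_hull_induct)
    case (refl u)
    then show ?case by (simp add: coord_le_def)
  next
    case (trans u v w)
    then show ?case unfolding coord_le_def by (auto intro: order_trans)
  next
    case (gen u v)
    then show ?case using local_log_segment[OF x] unfolding monotone_segments_def by blast
  qed
qed

lemma local_log_real_circ:
  assumes "(p, q) \<in> real_circ B (slit a)"
  shows "local_log a p \<le> local_log a q \<and> (local_log a p = local_log a q \<longrightarrow> p = q)"
proof -
  have "(p, q) \<in> cell_circ B (slit a)" using assms real_circ_eq[OF slit_open] by simp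
  from this cell_gen_field[OF slit_open] show ?thesis unfolding cell_circ_def
  proof (induction rule: preorder_hull_induct)
    case (gen u v)
    then obtain n x s t where uv: "u = real_pt B n x s" "v = real_pt B n x t" and x: "x \<in> fst B n"
      and st: "(s, t) \<in> dcube_circ n {z \<in> topspace (cube n). real_pt B n x z \<in> slit a}"
      by (auto elim!: cell_genE)
    have "s \<in> topspace (cube n)" "t \<in> topspace (cube n)"
      using preorder_on_field[OF circ_preorder[OF dcube_circulation openin_cell_preimage[OF slit_open x]] st]
      by auto
    moreover have le: "coord_le n s t" and
      diff: "local_log a v - local_log a u = (\<Sum>i<n. t i - s i)"
      using local_log_cell[OF x st] unfolding uv by (auto simp: sum_subtractf)
    moreover have nonneg: "\<forall>i\<in>{..<n}. 0 \<le> t i - s i" using le unfolding coord_le_def by auto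
    ultimately have "local_log a u = local_log a v \<longrightarrow> s = t"
      using sum_nonneg_eq_0_iff[of "{..<n}" "\<lambda>i. t i - s i"] unfolding topspace_cube
      by (auto intro!: PiE_ext[of s "{..<n}" _ t])
    moreover have "0 \<le> (\<Sum>i<n. t i - s i)" using nonneg by (intro sum_nonneg) auto
    ultimately show ?case using diff uv by auto
  qed auto
qed

lemma height_lift_circ:
  assumes "(e, e') \<in> lift_circ lift_space"
  shows "height e \<le> height e' \<and> (height e = height e' \<longrightarrow> e = e')"
  using assms lift_gen_field unfolding lift_circ_def
proof (induction rule: preorder_hull_induct)
  case (gen e1 e2)
  then obtain a k where e: "e1 \<in> sheet a k" "e2 \<in> sheet a k"
    and base: "(fst e1, fst e2) \<in> real_circ B (fst ` (lift_space \<inter> sheet a k))"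
    unfolding lift_gen_def by blast
  have "fst ` (lift_space \<inter> sheet a k) = slit a" using sheet_sub fst_sheet by (metis inf.absorb2)
  then have "local_log a (fst e1) \<le> local_log a (fst e2)"
    "local_log a (fst e1) = local_log a (fst e2) \<longrightarrow> fst e1 = fst e2"
    using local_log_real_circ base by auto
  moreover have "height e1 = local_log a (fst e1) + of_int k" "height e2 = local_log a (fst e2) + of_int k"
    using e unfolding sheet_def by auto
  ultimately show ?case using e sheet_section_fst by (metis add_right_cancel add_le_cancel_right)
qed auto

lemma lift_circ_antisym: "antisym (lift_circ lift_space)"
  using height_lift_circ by (intro antisymI) (meson order_antisym)

end

context precubical begin

lemma topspace_slit: "topspace (subtopology (real_top B) (slit a)) = slit a"
  using slit_pts by (auto simp: topspace_real_top)

lemma topspace_sheet: "topspace (subtopology lift_top (sheet a k)) = sheet a k"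
  using sheet_sub by (auto simp: topspace_lift_top)

lemma fst_stream_map: "stream_map (lift_top, lift_circ) (real_top B, real_circ B) fst"
  unfolding stream_map_def fst_conv snd_conv
proof (intro conjI allI impI)
  show "continuous_map lift_top (real_top B) fst" by (rule fst_cont)
  fix V x y assume V: "openin (real_top B) V" and xy: "(x, y) \<in> lift_circ {z \<in> topspace lift_top. fst z \<in> V}"
  show "(fst x, fst y) \<in> real_circ B V"
    by (rule lift_circ_fst[OF openin_continuous_map_preimage[OF fst_cont V] V _ xy]) blast
qed

lemma sheet_fst_map:
  "stream_map (subtopology lift_top (sheet a k), lift_circ) (subtopology (real_top B) (slit a), real_circ B) fst"
  unfolding stream_map_def fst_conv snd_conv
proof (intro conjI allI impI)
  show "continuous_map (subtopology lift_top (sheet a k)) (subtopology (real_top B) (slit a)) fst"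
    unfolding continuous_map_in_subtopology topspace_sheet
    using continuous_map_from_subtopology[OF fst_cont] fst_sheet by blast
  fix V x y
  assume V: "openin (subtopology (real_top B) (slit a)) V"
    and xy: "(x, y) \<in> lift_circ {z \<in> topspace (subtopology lift_top (sheet a k)). fst z \<in> V}"
  have V_open: "openin (real_top B) V" using V openin_open_subtopology[OF slit_open] by blast
  have "openin (subtopology lift_top (sheet a k)) {z \<in> topspace (subtopology lift_top (sheet a k)). fst z \<in> V}"
    by (rule openin_continuous_map_preimage[OF continuous_map_from_subtopology[OF fst_cont] V_open])
  then have "openin lift_top {z \<in> topspace (subtopology lift_top (sheet a k)). fst z \<in> V}"
    using sheet_open by (rule openin_trans_full)
  then show "(fst x, fst y) \<in> real_circ B V"
    by (rule lift_circ_fst[OF _ V_open _ xy]) blast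
qed

lemma sheet_section_map:
  "stream_map (subtopology (real_top B) (slit a), real_circ B) (subtopology lift_top (sheet a k), lift_circ)
     (sheet_section a k)"
  unfolding stream_map_def fst_conv snd_conv
proof (intro conjI allI impI)
  show "continuous_map (subtopology (real_top B) (slit a)) (subtopology lift_top (sheet a k)) (sheet_section a k)"
    unfolding continuous_map_in_subtopology topspace_slit
    using sheet_section_cont sheet_section_in_sheet by blast
  fix V' p q
  assume V': "openin (subtopology lift_top (sheet a k)) V'"
    and pq: "(p, q) \<in> real_circ B {z \<in> topspace (subtopology (real_top B) (slit a)). sheet_section a k z \<in> V'}"
  have V'_open: "openin lift_top V'" and V'_sub: "V' \<subseteq> sheet a k"
    using V' openin_open_subtopology[OF sheet_open] by blast+
  have "{z \<in> topspace (subtopology (real_top B) (slit a)). sheet_section a k z \<in> V'} = fst ` V'"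
  proof
    show "{z \<in> topspace (subtopology (real_top B) (slit a)). sheet_section a k z \<in> V'} \<subseteq> fst ` V'"
    proof
      fix z assume "z \<in> {z \<in> topspace (subtopology (real_top B) (slit a)). sheet_section a k z \<in> V'}"
      then have "sheet_section a k z \<in> V'" by simp
      then show "z \<in> fst ` V'" using fst_sheet_section by (metis image_eqI)
    qed
    show "fst ` V' \<subseteq> {z \<in> topspace (subtopology (real_top B) (slit a)). sheet_section a k z \<in> V'}"
    proof
      fix z assume "z \<in> fst ` V'"
      then obtain e where e: "e \<in> V'" "z = fst e" by blast
      then have "e \<in> sheet a k" using V'_sub by blast
      then have "sheet_section a k z = e" "z \<in> slit a" using sheet_section_fst e(2) fst_sheet by blast+
      then show "z \<in> {z \<in> topspace (subtopology (real_top B) (slit a)). sheet_section a k z \<in> V'}"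
        using e(1) topspace_slit by simp
    qed
  qed
  then show "(sheet_section a k p, sheet_section a k q) \<in> lift_circ V'"
    using lift_circ_section[OF V'_open V'_sub] pq by simp
qed

lemma sheet_iso:
  "stream_iso (open_substream (lift_top, lift_circ) (sheet a k)) (open_substream (real_top B, real_circ B) (slit a)) fst"
  unfolding stream_iso_def open_substream_def fst_conv snd_conv
  using sheet_fst_map sheet_section_map sheet_section_fst fst_sheet_section
  unfolding topspace_sheet topspace_slit by blast

text \<open>The projection is surjective, since the sheets over the two slit domains cover.\<close>
lemma fst_lift_space: "fst ` topspace lift_top = topspace (real_top B)"
  unfolding topspace_lift_top topspace_real_top
proof
  show "fst ` lift_space \<subseteq> pts" using lift_space_iff by blast
  show "pts \<subseteq> fst ` lift_space"
  proof
    fix P assume "P \<in> pts"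
    then obtain a where "P \<in> slit a" using slit_cover by blast
    then have "sheet_section a 0 P \<in> lift_space" using sheet_section_in_sheet sheet_sub by blast
    then show "P \<in> fst ` lift_space" using fst_sheet_section by (metis image_eqI)
  qed
qed

lemma slit_evenly_covered:
  "\<exists>\<W>. (\<forall>W\<in>\<W>. openin lift_top W) \<and> pairwise disjnt \<W> \<and>
        \<Union>\<W> = {e \<in> topspace lift_top. fst e \<in> slit a} \<and>
        (\<forall>W\<in>\<W>. stream_iso (open_substream (lift_top, lift_circ) W)
                             (open_substream (real_top B, real_circ B) (slit a)) fst)"
proof (intro exI[of _ "range (sheet a)"] conjI ballI)
  show "pairwise disjnt (range (sheet a))"
  proof (rule pairwiseI)
    fix X Y assume "X \<in> range (sheet a)" "Y \<in> range (sheet a)" "X \<noteq> Y"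
    then obtain k k' where "X = sheet a k" "Y = sheet a k'" "k \<noteq> k'" by blast
    then show "disjnt X Y" unfolding disjnt_def using sheets_disjoint by blast
  qed
  show "\<Union>(range (sheet a)) = {e \<in> topspace lift_top. fst e \<in> slit a}"
    unfolding topspace_lift_top sheets_cover ..
qed (use sheet_open sheet_iso in auto)

lemma lift_covering: "stream_covering (lift_top, lift_circ) (stream_realization B) fst"
  unfolding stream_covering_def stream_realization_def fst_conv snd_conv
proof (intro conjI)
  show "is_stream (lift_top, lift_circ)" unfolding is_stream_def using lift_circ_circulation by simp
  show "is_stream (real_top B, real_circ B)" unfolding is_stream_def using real_circ_circulation by simp
  show "stream_map (lift_top, lift_circ) (real_top B, real_circ B) fst" by (rule fst_stream_map)
  show "fst ` topspace lift_top = topspace (real_top B)" by (rule fst_lift_space)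
  have "\<Union>(slit ` {0, 1/2}) = topspace (real_top B)" using slit_cover topspace_real_top by auto
  then show "\<exists>\<U>. (\<forall>U\<in>\<U>. openin (real_top B) U) \<and> \<Union>\<U> = topspace (real_top B) \<and>
    (\<forall>U\<in>\<U>. \<exists>\<W>. (\<forall>W\<in>\<W>. openin lift_top W) \<and> pairwise disjnt \<W> \<and>
      \<Union>\<W> = {e \<in> topspace lift_top. fst e \<in> U} \<and>
      (\<forall>W\<in>\<W>. stream_iso (open_substream (lift_top, lift_circ) W) (open_substream (real_top B, real_circ B) U) fst))"
    using slit_open slit_evenly_covered by (intro exI[of _ "slit ` {0, 1/2}"]) blast
qed

end

theorem mainTheorem1:
  fixes B :: "'c precubical"
  assumes "precubical_set B"
  shows "\<exists>(E :: ('c rpt \<times> (real \<Rightarrow> 'c rpt) set) stream) \<rho>.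
           stream_covering E (stream_realization B) \<rho> \<and> antisym (leq E)"
proof -
  interpret precubical B by (rule precubical.intro) (rule assms)
  have "leq (lift_top, lift_circ) = lift_circ lift_space"
    by (simp add: leq_def topspace_lift_top)
  then have "stream_covering (lift_top, lift_circ) (stream_realization B) fst \<and>
             antisym (leq (lift_top, lift_circ))"
    using lift_covering lift_circ_antisym by simp
  then show ?thesis by blast
qed

end
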